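(* Suppose Assumption A2 holds, $F^*>-\infty$, and $x^k$ is generated by Algorithm (2-RCD) with the pair $\{i_k,j_k\}$ drawn i.i.d. uniformly among the $N(N-1)/2$ unordered pairs of distinct indices. Then: (i) the sequence of random variables $M_2(x^k,\Gamma)$ converges to $0$ almost surely, and $F(x^k)$ converges almost surely to some random variable $\bar F$; (ii) every accumulation point of $x^k$ is a stationary point of problem $\min\{F(x): a^Tx=b\}$, i.e. a feasible point $x^*$ for which there exists $\lambda^*\in\mathbb{R}$ with $0\in\nabla f(x^* )+\partial h(x^* )+\lambda^*a$.
   Context: Block structure: $n=\sum_{i=1}^N n_i$ with $N\ge2$, $I_n=[U_1\ \dots\ U_N]$, $x_i=U_i^Tx$, $\nabla_if(x)=U_i^T\nabla f(x)$, $a_i=U_i^Ta$; for $i\ne j$, $s_{ij}=[s_i^T\ s_j^T]^T$, $\nabla_{ij}f(x)=[\nabla_if(x)^T\ \nabla_jf(x)^T]^T$, and $x+s_{ij}$ means $x+U_is_i+U_js_j$. Problem: $F^*=\min\{F(x):=f(x)+h(x):\ a^Tx=b\}$ with $a\in\mathbb{R}^n$ nonzero. Assumption A2: (i) $f$ is differentiable and there are constants $L_{ij}=L_{ji}>0$ with $\|\nabla_{ij}f(x+U_is_i+U_js_j)-\nabla_{ij}f(x)\|\le L_{ij}\|s_{ij}\|$ for all $s_{ij}$, $x$, $i,j=1,\dots,N$; (ii) $h$ is proper, convex, continuous, $h(x)=\sum_{i=1}^n h_i(x_i)$ with each $h_i:\mathbb{R}\to\mathbb{R}$ convex. Algorithm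 (2-RCD): given $x^0$ with $a^Tx^0=b$, for $k\ge0$ choose randomly a pair $(i_k,j_k)$, $i_k\ne j_k$, compute $d_{i_kj_k}=\arg\min\{ f(x^k)+\langle\nabla_{i_kj_k}f(x^k),s_{i_kj_k}\rangle+\frac{L_{i_kj_k}}{2}\|s_{i_kj_k}\|^2+h(x^k+s_{i_kj_k}) :\ a_{i_k}^Ts_{i_k}+a_{j_k}^Ts_{j_k}=0\}$, and set $x^{k+1}=x^k+U_{i_k}d_{i_k}+U_{j_k}d_{j_k}$. Notation: $\Gamma_i=\frac1N\sum_{j=1}^N L_{ij}$. For $\Lambda\in\mathbb{R}^N$ with positive entries, $\|x\|_\Lambda=(\sum_i\Lambda_i\|x_i\|^2)^{1/2}$, $\|y\|_\Lambda^*=(\sum_i\Lambda_i^{-1}\|y_i\|^2)^{1/2}$, $D_\Lambda=\mathrm{diag}(\Lambda_1I_{n_1},\dots,\Lambda_NI_{n_N})$, $S=\{s:a^Ts=0\}$, $d_\Lambda(x)=\arg\min_{s\in S} f(x)+\langle\nabla f(x),s\rangle+\frac12\|s\|_\Lambda^2+h(x+s)$. Optimality measure: $M_2(x,\Gamma)=\|D_\Gamma\,d_{N\Gamma}(x)\|_\Gamma^*$. *)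

theory Defs
  imports "HOL-Probability.Probability"
begin

text \<open>Coordinates of R^n are indexed by a finite type 'n; blk c is the block (in 0..<N)
  that coordinate c belongs to.  Blocks are 0-based.\<close>

definition supported_in :: "('n::finite \<Rightarrow> nat) \<Rightarrow> nat set \<Rightarrow> real^'n \<Rightarrow> bool" where
  "supported_in blk B s \<longleftrightarrow> (\<forall>c. blk c \<notin> B \<longrightarrow> s $ c = 0)"

definition blk_norm :: "('n::finite \<Rightarrow> nat) \<Rightarrow> nat set \<Rightarrow> real^'n \<Rightarrow> real" where
  "blk_norm blk B v = sqrt (\<Sum>c\<in>{c. blk c \<in> B}. (v $ c)^2)"

definition sep_fun :: "('n::finite \<Rightarrow> real \<Rightarrow> real) \<Rightarrow> real^'n \<Rightarrow> real" where
  "sep_fun hc x = (\<Sum>c\<in>UNIV. hc c (x $ c))"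

definition rcd_dir :: "(real^'n \<Rightarrow> real) \<Rightarrow> (real^'n \<Rightarrow> real^'n) \<Rightarrow> ('n::finite \<Rightarrow> real \<Rightarrow> real)
    \<Rightarrow> (nat \<Rightarrow> nat \<Rightarrow> real) \<Rightarrow> ('n \<Rightarrow> nat) \<Rightarrow> real^'n \<Rightarrow> real^'n \<Rightarrow> nat \<Rightarrow> nat \<Rightarrow> real^'n" where
  "rcd_dir f g hc L blk a x i j =
    (let obj = (\<lambda>t. f x + g x \<bullet> t + L i j / 2 * (norm t)^2 + sep_fun hc (x + t))
     in THE s. supported_in blk {i, j} s \<and> a \<bullet> s = 0 \<and>
          (\<forall>t. supported_in blk {i, j} t \<and> a \<bullet> t = 0 \<longrightarrow> obj s \<le> obj t))"

text \<open>Iterates of 2-RCD along a sample path omega (omega !! k is the unordered pair drawn at step k).\<close>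
primrec rcd_iter :: "(real^'n \<Rightarrow> real) \<Rightarrow> (real^'n \<Rightarrow> real^'n) \<Rightarrow> ('n::finite \<Rightarrow> real \<Rightarrow> real)
    \<Rightarrow> (nat \<Rightarrow> nat \<Rightarrow> real) \<Rightarrow> ('n \<Rightarrow> nat) \<Rightarrow> real^'n \<Rightarrow> real^'n \<Rightarrow> nat set stream \<Rightarrow> nat \<Rightarrow> real^'n" where
  "rcd_iter f g hc L blk a x0 \<omega> 0 = x0"
| "rcd_iter f g hc L blk a x0 \<omega> (Suc k) =
     (let x = rcd_iter f g hc L blk a x0 \<omega> k
      in x + rcd_dir f g hc L blk a x (Min (\<omega> !! k)) (Max (\<omega> !! k)))"

definition wnorm :: "('n::finite \<Rightarrow> nat) \<Rightarrow> (nat \<Rightarrow> real) \<Rightarrow> real^'n \<Rightarrow> real" where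
  "wnorm blk \<Lambda> x = sqrt (\<Sum>c\<in>UNIV. \<Lambda> (blk c) * (x $ c)^2)"

definition wnorm_dual :: "('n::finite \<Rightarrow> nat) \<Rightarrow> (nat \<Rightarrow> real) \<Rightarrow> real^'n \<Rightarrow> real" where
  "wnorm_dual blk \<Lambda> y = sqrt (\<Sum>c\<in>UNIV. (y $ c)^2 / \<Lambda> (blk c))"

definition Dmat :: "('n::finite \<Rightarrow> nat) \<Rightarrow> (nat \<Rightarrow> real) \<Rightarrow> real^'n \<Rightarrow> real^'n" where
  "Dmat blk \<Lambda> x = (\<chi> c. \<Lambda> (blk c) * x $ c)"

definition d_Lam :: "(real^'n \<Rightarrow> real) \<Rightarrow> (real^'n \<Rightarrow> real^'n) \<Rightarrow> ('n::finite \<Rightarrow> real \<Rightarrow> real)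
    \<Rightarrow> ('n \<Rightarrow> nat) \<Rightarrow> real^'n \<Rightarrow> (nat \<Rightarrow> real) \<Rightarrow> real^'n \<Rightarrow> real^'n" where
  "d_Lam f g hc blk a \<Lambda> x =
    (let obj = (\<lambda>t. f x + g x \<bullet> t + 1/2 * (wnorm blk \<Lambda> t)^2 + sep_fun hc (x + t))
     in THE s. a \<bullet> s = 0 \<and> (\<forall>t. a \<bullet> t = 0 \<longrightarrow> obj s \<le> obj t))"

definition Gamma :: "nat \<Rightarrow> (nat \<Rightarrow> nat \<Rightarrow> real) \<Rightarrow> nat \<Rightarrow> real" where
  "Gamma N L i = (1 / real N) * (\<Sum>j<N. L i j)"

definition M2 :: "(real^'n \<Rightarrow> real) \<Rightarrow> (real^'n \<Rightarrow> real^'n) \<Rightarrow> ('n::finite \<Rightarrow> real \<Rightarrow> real)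
    \<Rightarrow> ('n \<Rightarrow> nat) \<Rightarrow> real^'n \<Rightarrow> nat \<Rightarrow> (nat \<Rightarrow> nat \<Rightarrow> real) \<Rightarrow> real^'n \<Rightarrow> real" where
  "M2 f g hc blk a N L x =
    wnorm_dual blk (Gamma N L)
      (Dmat blk (Gamma N L) (d_Lam f g hc blk a (\<lambda>i. real N * Gamma N L i) x))"

definition subdiff :: "('a::real_inner \<Rightarrow> real) \<Rightarrow> 'a \<Rightarrow> 'a set" where
  "subdiff h x = {v. \<forall>y. h x + v \<bullet> (y - x) \<le> h y}"

definition stationary :: "(real^'n \<Rightarrow> real^'n) \<Rightarrow> (real^'n \<Rightarrow> real) \<Rightarrow> real^'n \<Rightarrow> real \<Rightarrow> real^'n \<Rightarrow> bool" where
  "stationary g h a b x \<longleftrightarrow> a \<bullet> x = b \<and>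
     (\<exists>lam::real. \<exists>v \<in> subdiff h x. g x + v + lam *\<^sub>R a = 0)"

end

theory Submission
  imports Defs
begin

text \<open>Each 2-RCD step minimises an upper model of F over the feasible directions of one pair
  of blocks, so F decreases along every sample path. The full-space direction d = d_N\<Gamma>(x)
  splits, with weights pairing blocks whose parts of d contribute to a \<bullet> d with opposite
  signs, into feasible pair directions; convexity of the separable model increments then bounds
  the expected decrease F(x) - E F(x') below by a multiple of |d|^2, hence of M2(x, \<Gamma>)^2.
  Summing over k gives E (\<Sum>k. M2(x_k, \<Gamma>)^2) \<le> C (F(x_0) - F*) < \<infinity>, so M2(x_k, \<Gamma>) \<rightarrow> 0
  almost surely. At an accumulation point x*, optimality of d_N\<Gamma> passes to the limit and shows
  that s = 0 minimises the linearised problem over a \<bullet> s = 0; a Lagrange multiplier for this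
  single linear constraint yields 0 \<in> \<nabla>f(x*) + \<partial>h(x*) + \<lambda> a.\<close>

section \<open>Separable convex functions and strongly convex minimisation\<close>

lemma convex_real_ge_minus_linear:
  fixes \<phi> :: "real \<Rightarrow> real"
  assumes cv: "convex_on UNIV \<phi>"
  shows "\<exists>K\<ge>0. \<forall>u. \<phi> y - K * \<bar>u\<bar> \<le> \<phi> (y + u)"
proof -
  define K where "K = \<bar>\<phi> (y + 1) - \<phi> y\<bar> + \<bar>\<phi> y - \<phi> (y - 1)\<bar>"
  \<comment> \<open>three-slope inequality: the slope of \<phi> between y and y + u is at least its slope on
    [y - 1, y] if u > 0, and at most its slope on [y, y + 1] if u < 0\<close>
  have "\<phi> y - K * \<bar>u\<bar> \<le> \<phi> (y + u)" for u
  proof (cases u "0::real" rule: linorder_cases)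
    case less
    have "(\<phi> (y + u) - \<phi> y) / u \<le> \<phi> (y + 1) - \<phi> y"
      using convex_on_slope_le[OF cv, of "y + u" "y + 1" y] less by simp
    then have "u * (\<phi> (y + 1) - \<phi> y) \<le> \<phi> (y + u) - \<phi> y"
      using less by (simp add: divide_le_eq mult.commute)
    moreover have "- (\<bar>\<phi> (y + 1) - \<phi> y\<bar> * \<bar>u\<bar>) \<le> u * (\<phi> (y + 1) - \<phi> y)"
      by (metis abs_ge_minus_self abs_mult minus_le_iff mult.commute)
    ultimately show ?thesis
      unfolding K_def by (smt (verit, best) abs_ge_zero mult_nonneg_nonneg distrib_right)
  next
    case greater
    have "y - 1 < y" "y < y + u" using greater by auto
    from convex_on_slope_le[OF cv _ _ this] order.trans
    have "(\<phi> (y - 1) - \<phi> y) / ((y - 1) - y) \<le> (\<phi> y - \<phi> (y + u)) / (y - (y + u))"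
      by blast
    moreover have "(\<phi> (y - 1) - \<phi> y) / ((y - 1) - y) = \<phi> y - \<phi> (y - 1)" by simp
    moreover have "(\<phi> y - \<phi> (y + u)) / (y - (y + u)) = (\<phi> (y + u) - \<phi> y) / u"
      by (metis add_diff_cancel_left' minus_diff_eq minus_divide_divide)
    ultimately have "\<phi> y - \<phi> (y - 1) \<le> (\<phi> (y + u) - \<phi> y) / u" by simp
    then have "u * (\<phi> y - \<phi> (y - 1)) \<le> \<phi> (y + u) - \<phi> y"
      using greater by (simp add: le_divide_eq mult.commute)
    moreover have "- (\<bar>\<phi> y - \<phi> (y - 1)\<bar> * \<bar>u\<bar>) \<le> u * (\<phi> y - \<phi> (y - 1))"
      by (metis abs_ge_minus_self abs_mult minus_le_iff mult.commute)
    ultimately show ?thesis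
      unfolding K_def by (smt (verit, best) abs_ge_zero mult_nonneg_nonneg distrib_right)
  qed (simp add: K_def)
  moreover have "K \<ge> 0" by (simp add: K_def)
  ultimately show ?thesis by blast
qed

lemma norm_sq_vec: "(norm (t::real^'n::finite))^2 = (\<Sum>c\<in>UNIV. (t$c)^2)"
proof -
  have "(norm t)^2 = inner t t" by (simp add: power2_norm_eq_inner)
  also have "\<dots> = (\<Sum>c\<in>UNIV. (t$c)^2)" by (simp add: inner_vec_def power2_eq_square)
  finally show ?thesis .
qed

lemma convex_on_sep_fun:
  assumes "\<forall>c. convex_on UNIV (hc c)"
  shows "convex_on UNIV (sep_fun hc :: real^'n::finite \<Rightarrow> real)"
proof (rule convex_onI)
  fix t :: real and x y :: "real^'n" assume t: "0 < t" "t < 1"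
  have "hc c ((1 - t) * x$c + t * y$c) \<le> (1 - t) * hc c (x$c) + t * hc c (y$c)" for c
    using convex_onD[OF assms[rule_format, of c], of t "x$c" "y$c"] t by simp
  then have "sep_fun hc ((1 - t) *\<^sub>R x + t *\<^sub>R y)
      \<le> (\<Sum>c\<in>UNIV. (1 - t) * hc c (x$c) + t * hc c (y$c))"
    unfolding sep_fun_def by (auto intro: sum_mono)
  then show "sep_fun hc ((1 - t) *\<^sub>R x + t *\<^sub>R y) \<le> (1 - t) * sep_fun hc x + t * sep_fun hc y"
    by (simp add: sep_fun_def sum.distrib sum_distrib_left)
qed simp

lemma continuous_on_sep_fun:
  assumes "\<forall>c. convex_on UNIV (hc c)"
  shows "continuous_on UNIV (sep_fun hc :: real^'n::finite \<Rightarrow> real)"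
  by (rule convex_on_continuous[OF open_UNIV convex_on_sep_fun[OF assms]])

lemma sep_fun_ge_minus_linear:
  assumes hconv: "\<forall>c. convex_on UNIV (hc c)"
  shows "\<exists>K\<ge>0. \<forall>t. sep_fun hc x - K * norm t \<le> sep_fun hc (x + t :: real^'n::finite)"
proof -
  have "\<forall>c. \<exists>k\<ge>0. \<forall>u. hc c (x$c) - k * \<bar>u\<bar> \<le> hc c (x$c + u)"
    using convex_real_ge_minus_linear hconv by blast
  then obtain K where K: "\<forall>c. K c \<ge> 0 \<and> (\<forall>u. hc c (x$c) - K c * \<bar>u\<bar> \<le> hc c (x$c + u))"
    by metis
  have "hc c (x$c) - K c * norm t \<le> hc c ((x + t)$c)" for c t
  proof -
    have "K c * \<bar>t$c\<bar> \<le> K c * norm t"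
      using K by (intro mult_left_mono component_le_norm_cart) auto
    then show ?thesis using K by (smt (verit) vector_add_component)
  qed
  then have "sep_fun hc x - (\<Sum>c\<in>UNIV. K c) * norm t \<le> sep_fun hc (x + t)" for t
    unfolding sep_fun_def sum_distrib_right sum_subtractf[symmetric] by (intro sum_mono) auto
  moreover have "(\<Sum>c\<in>UNIV. K c) \<ge> 0" using K by (simp add: sum_nonneg)
  ultimately show ?thesis by blast
qed

lemma strongly_convex_argmin_exists:
  fixes K :: "(real^'n::finite) set" and \<psi> :: "real^'n \<Rightarrow> real"
  assumes K: "subspace K" and w: "\<forall>c. 0 < w c" and cv: "convex_on UNIV \<psi>"
    and lb: "\<forall>t. \<psi> 0 - B * norm t \<le> \<psi> t"
  shows "\<exists>s\<in>K. \<forall>t\<in>K. \<psi> s + (\<Sum>c\<in>UNIV. w c * (s$c)^2) \<le> \<psi> t + (\<Sum>c\<in>UNIV. w c * (t$c)^2)"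
proof -
  define \<phi> where "\<phi> t = \<psi> t + (\<Sum>c\<in>UNIV. w c * (t$c)^2)" for t
  define wm where "wm = Min (range w)"
  have wm: "0 < wm" "\<And>c. wm \<le> w c" unfolding wm_def using w by auto
  have lower: "\<phi> 0 - \<bar>B\<bar> * norm t + wm * (norm t)^2 \<le> \<phi> t" for t
  proof -
    have "wm * (norm t)^2 \<le> (\<Sum>c\<in>UNIV. w c * (t$c)^2)"
      unfolding norm_sq_vec sum_distrib_left using wm by (intro sum_mono mult_right_mono) auto
    moreover have "B * norm t \<le> \<bar>B\<bar> * norm t" by (simp add: mult_right_mono)
    ultimately show ?thesis using lb[rule_format, of t] by (simp add: \<phi>_def)
  qed
  define R where "R = \<bar>B\<bar> / wm + 1"
  have far: "\<phi> 0 < \<phi> t" if "R < norm t" for t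
  proof -
    have B: "\<bar>B\<bar> < wm * norm t" using that wm by (simp add: R_def field_simps)
    have "0 \<le> \<bar>B\<bar> / wm" using wm by simp
    then have "0 < norm t" using that unfolding R_def by linarith
    then have "0 < norm t * (wm * norm t - \<bar>B\<bar>)" using B by simp
    then show ?thesis using lower[of t] by (simp add: algebra_simps power2_eq_square)
  qed
  have "continuous_on UNIV \<phi>"
    unfolding \<phi>_def using convex_on_continuous[OF open_UNIV cv]
    by (intro continuous_intros) auto
  moreover have "compact (cball 0 R \<inter> K)"
    by (intro compact_Int_closed compact_cball closed_subspace K)
  moreover have zero: "0 \<in> cball 0 R \<inter> K" using wm subspace_0[OF K] by (simp add: R_def)
  ultimately obtain s where s: "s \<in> cball 0 R \<inter> K" "\<forall>t\<in>cball 0 R \<inter> K. \<phi> s \<le> \<phi> t"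
    using continuous_attains_inf[of "cball 0 R \<inter> K" \<phi>] continuous_on_subset by blast
  have "\<phi> s \<le> \<phi> t" if "t \<in> K" for t
  proof (cases "norm t \<le> R")
    case True
    then show ?thesis using s that by auto
  next
    case False
    then show ?thesis using s(2)[rule_format, OF zero] far[of t] by linarith
  qed
  then show ?thesis using s unfolding \<phi>_def by auto
qed

lemma strongly_convex_argmin_unique:
  fixes K :: "(real^'n::finite) set" and \<psi> :: "real^'n \<Rightarrow> real" and w :: "'n \<Rightarrow> real"
  defines "\<phi> \<equiv> \<lambda>t. \<psi> t + (\<Sum>c\<in>UNIV. w c * (t$c)^2)"
  assumes K: "subspace K" and w: "\<forall>c. 0 < w c" and cv: "convex_on UNIV \<psi>"
    and s1: "s1 \<in> K" "\<forall>t\<in>K. \<phi> s1 \<le> \<phi> t" and s2: "s2 \<in> K" "\<forall>t\<in>K. \<phi> s2 \<le> \<phi> t"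
  shows "s1 = s2"
proof -
  define m where "m = (1/2) *\<^sub>R s1 + (1/2) *\<^sub>R s2"
  have "m \<in> K" unfolding m_def using s1 s2 K by (intro subspace_add subspace_scale)
  then have "\<phi> s1 + \<phi> s2 \<le> 2 * \<phi> m" using s1 s2 by fastforce
  moreover have "\<psi> m \<le> (\<psi> s1 + \<psi> s2) / 2"
    using convex_onD[OF cv, of "1/2" s1 s2] by (simp add: m_def)
  moreover have "(\<Sum>c\<in>UNIV. w c * (m$c)^2) + (\<Sum>c\<in>UNIV. w c * ((s1 - s2)$c)^2) / 4
      = ((\<Sum>c\<in>UNIV. w c * (s1$c)^2) + (\<Sum>c\<in>UNIV. w c * (s2$c)^2)) / 2"
  proof -
    have parallelogram: "w c * (m$c)^2 + w c * ((s1 - s2)$c)^2 / 4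
        = (w c * (s1$c)^2 + w c * (s2$c)^2) / 2" for c
      by (simp add: m_def power2_eq_square field_simps)
    have "(\<Sum>c\<in>UNIV. w c * (m$c)^2) + (\<Sum>c\<in>UNIV. w c * ((s1 - s2)$c)^2) / 4
        = (\<Sum>c\<in>UNIV. w c * (m$c)^2 + w c * ((s1 - s2)$c)^2 / 4)"
      by (simp add: sum.distrib sum_divide_distrib)
    also have "\<dots> = (\<Sum>c\<in>UNIV. (w c * (s1$c)^2 + w c * (s2$c)^2) / 2)"
      by (rule sum.cong[OF refl parallelogram])
    also have "\<dots> = ((\<Sum>c\<in>UNIV. w c * (s1$c)^2) + (\<Sum>c\<in>UNIV. w c * (s2$c)^2)) / 2"
      by (simp only: sum_divide_distrib[symmetric] sum.distrib)
    finally show ?thesis .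
  qed
  ultimately have "(\<Sum>c\<in>UNIV. w c * ((s1 - s2)$c)^2) \<le> 0" unfolding \<phi>_def by argo
  moreover have nonneg: "\<forall>c\<in>UNIV. 0 \<le> w c * ((s1 - s2)$c)^2" using w by (simp add: less_imp_le)
  ultimately have "(\<Sum>c\<in>UNIV. w c * ((s1 - s2)$c)^2) = 0" by (simp add: order_antisym sum_nonneg)
  then have "\<forall>c. w c * ((s1 - s2)$c)^2 = 0" using nonneg by (simp add: sum_nonneg_eq_0_iff)
  then show ?thesis using w by (simp add: vec_eq_iff) (metis less_irrefl)
qed

lemma convex_on_affine_plus_sep_fun:
  assumes hconv: "\<forall>c. convex_on UNIV (hc c)"
  shows "convex_on UNIV (\<lambda>t. c0 + v \<bullet> t + sep_fun hc (x + t :: real^'n::finite))"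
proof (rule convex_onI)
  fix \<theta> :: real and u u' :: "real^'n" assume "0 < \<theta>" "\<theta> < 1"
  then have "sep_fun hc ((1 - \<theta>) *\<^sub>R (x + u) + \<theta> *\<^sub>R (x + u'))
      \<le> (1 - \<theta>) * sep_fun hc (x + u) + \<theta> * sep_fun hc (x + u')"
    by (intro convex_onD[OF convex_on_sep_fun[OF hconv]]) auto
  moreover have "(1 - \<theta>) *\<^sub>R (x + u) + \<theta> *\<^sub>R (x + u') = x + ((1 - \<theta>) *\<^sub>R u + \<theta> *\<^sub>R u')"
    by (simp add: algebra_simps)
  ultimately show "c0 + v \<bullet> ((1 - \<theta>) *\<^sub>R u + \<theta> *\<^sub>R u') + sep_fun hc (x + ((1 - \<theta>) *\<^sub>R u + \<theta> *\<^sub>R u'))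
      \<le> (1 - \<theta>) * (c0 + v \<bullet> u + sep_fun hc (x + u)) + \<theta> * (c0 + v \<bullet> u' + sep_fun hc (x + u'))"
    by (simp add: inner_add_right algebra_simps)
qed simp

lemma ex1_argmin_quadratic_sep_fun:
  fixes K :: "(real^'n::finite) set"
  assumes K: "subspace K" and w: "\<forall>c. 0 < w c" and hconv: "\<forall>c. convex_on UNIV (hc c)"
    and \<phi>: "\<And>t. \<phi> t = c0 + v \<bullet> t + (\<Sum>c\<in>UNIV. w c * (t$c)^2) + sep_fun hc (x + t)"
  shows "\<exists>!s. s \<in> K \<and> (\<forall>t\<in>K. \<phi> s \<le> \<phi> t)"
proof -
  define \<psi> where "\<psi> t = c0 + v \<bullet> t + sep_fun hc (x + t)" for t
  have \<phi>\<psi>: "\<phi> t = \<psi> t + (\<Sum>c\<in>UNIV. w c * (t$c)^2)" for t by (simp add: \<phi> \<psi>_def)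
  have "convex_on UNIV \<psi>"
    unfolding \<psi>_def by (rule convex_on_affine_plus_sep_fun[OF hconv])
  moreover obtain B where "\<forall>t. \<psi> 0 - B * norm t \<le> \<psi> t"
  proof -
    obtain Ks where Ks: "\<forall>t. sep_fun hc x - Ks * norm t \<le> sep_fun hc (x + t)"
      using sep_fun_ge_minus_linear[OF hconv] by blast
    have "\<psi> 0 - (norm v + Ks) * norm t \<le> \<psi> t" for t
      using norm_cauchy_schwarz[of "-v" t] Ks[rule_format, of t] by (simp add: \<psi>_def algebra_simps)
    then have "\<forall>t. \<psi> 0 - (norm v + Ks) * norm t \<le> \<psi> t" by blast
    then show thesis by (rule that)
  qed
  ultimately obtain s where "s \<in> K" "\<forall>t\<in>K. \<phi> s \<le> \<phi> t"
    unfolding \<phi>\<psi> using strongly_convex_argmin_exists[OF K w] by blast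
  then show ?thesis
    using strongly_convex_argmin_unique[OF K w \<open>convex_on UNIV \<psi>\<close>] unfolding \<phi>\<psi> by blast
qed

section \<open>Block descent lemma and a Lagrange multiplier\<close>

lemma inner_le_blk_norm_mul_norm:
  assumes "supported_in blk B d"
  shows "u \<bullet> d \<le> blk_norm blk B u * norm (d::real^'n::finite)"
proof -
  define r where "r = (\<chi> c. if blk c \<in> B then u$c else 0)"
  have "u \<bullet> d = r \<bullet> d"
    using assms unfolding r_def supported_in_def inner_vec_def by (intro sum.cong) auto
  also have "\<dots> \<le> norm r * norm d" by (rule norm_cauchy_schwarz)
  also have "norm r = blk_norm blk B u"
  proof -
    have "(norm r)^2 = (\<Sum>c\<in>UNIV. if blk c \<in> B then (u$c)^2 else 0)"
      unfolding norm_sq_vec r_def by (intro sum.cong) auto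
    also have "\<dots> = (\<Sum>c\<in>{c. blk c \<in> B}. (u$c)^2)"
      by (simp add: sum.If_cases Int_def)
    finally show ?thesis unfolding blk_norm_def by (metis norm_ge_zero real_sqrt_unique)
  qed
  finally show ?thesis .
qed

lemma blk_norm_ge_component: "blk c \<in> B \<Longrightarrow> \<bar>v$c\<bar> \<le> blk_norm blk B (v::real^'n::finite)"
proof -
  assume "blk c \<in> B"
  then have "(v$c)^2 \<le> (\<Sum>c'\<in>{c'. blk c' \<in> B}. (v$c')^2)"
    by (intro member_le_sum) auto
  then have "sqrt ((v$c)^2) \<le> blk_norm blk B v" unfolding blk_norm_def by (rule real_sqrt_le_mono)
  then show ?thesis by simp
qed

lemma block_descent_lemma:
  fixes f :: "real^'n::finite \<Rightarrow> real"
  assumes grad: "\<forall>x. (f has_derivative (\<lambda>v. g x \<bullet> v)) (at x)"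
    and Lip: "\<forall>x s. supported_in blk B s \<longrightarrow> blk_norm blk B (g (x + s) - g x) \<le> l * norm s"
    and d: "supported_in blk B d"
  shows "f (x + d) \<le> f x + g x \<bullet> d + l / 2 * (norm d)^2"
proof -
  define \<phi> where "\<phi> \<theta> = f (x + \<theta> *\<^sub>R d) - \<theta> * (g x \<bullet> d) - \<theta>^2 * (l/2) * (norm d)^2" for \<theta>
  have D: "DERIV \<phi> \<theta> :> g (x + \<theta> *\<^sub>R d) \<bullet> d - g x \<bullet> d - \<theta> * l * (norm d)^2" for \<theta>
  proof -
    have "((\<lambda>\<theta>. f (x + \<theta> *\<^sub>R d)) has_derivative (\<lambda>h. g (x + \<theta> *\<^sub>R d) \<bullet> (h *\<^sub>R d))) (at \<theta>)"
      by (rule has_derivative_compose[OF _ grad[rule_format]]) (auto intro!: derivative_eq_intros)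
    then have "DERIV (\<lambda>\<theta>. f (x + \<theta> *\<^sub>R d)) \<theta> :> g (x + \<theta> *\<^sub>R d) \<bullet> d"
      by (rule has_derivative_imp_has_field_derivative) simp
    then show ?thesis unfolding \<phi>_def
      by (auto intro!: derivative_eq_intros simp: power2_eq_square)
  qed
  have "\<phi> 1 \<le> \<phi> 0"
  proof (rule DERIV_nonpos_imp_nonincreasing[of 0 1 \<phi>])
    fix \<theta> :: real assume \<theta>: "0 \<le> \<theta>" "\<theta> \<le> 1"
    have d\<theta>: "supported_in blk B (\<theta> *\<^sub>R d)" using d by (simp add: supported_in_def)
    have "(g (x + \<theta> *\<^sub>R d) - g x) \<bullet> d \<le> blk_norm blk B (g (x + \<theta> *\<^sub>R d) - g x) * norm d"
      by (rule inner_le_blk_norm_mul_norm[OF d])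
    also have "blk_norm blk B (g (x + \<theta> *\<^sub>R d) - g x) * norm d \<le> (l * norm (\<theta> *\<^sub>R d)) * norm d"
      using Lip[rule_format, OF d\<theta>] by (intro mult_right_mono) auto
    also have "\<dots> = \<theta> * l * (norm d)^2" using \<theta> by (simp add: power2_eq_square)
    finally have "g (x + \<theta> *\<^sub>R d) \<bullet> d - g x \<bullet> d - \<theta> * l * (norm d)^2 \<le> 0"
      by (simp add: inner_diff_left)
    then show "\<exists>y. DERIV \<phi> \<theta> :> y \<and> y \<le> 0" using D by blast
  qed simp
  then show ?thesis by (simp add: \<phi>_def)
qed

lemma lipschitz_on_of_block_bounds:
  fixes g :: "real^'n::finite \<Rightarrow> real^'n"
  assumes blk: "\<And>c. blk c < N" and K: "0 \<le> K"
    and bound: "\<And>i x s c. i < N \<Longrightarrow> supported_in blk {i} s \<Longrightarrow> \<bar>(g (x + s) - g x)$c\<bar> \<le> K * norm s"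
  shows "(real CARD('n) * (real N * K))-lipschitz_on UNIV g"
proof -
  define part where "part n s = (\<chi> c. if blk c < n then s$c else (0::real))" for n s
  have telescope: "\<bar>(g (x + part n s) - g x)$c\<bar> \<le> real n * K * norm s" for n x s c
  proof (induction n arbitrary: x)
    case 0
    have "part 0 s = 0" by (simp add: part_def vec_eq_iff)
    then show ?case by simp
  next
    case (Suc n)
    define s' where "s' = (\<chi> c. if blk c = n then s$c else (0::real))"
    have "part (Suc n) s = part n s + s'" by (auto simp: part_def s'_def vec_eq_iff)
    then have split: "(g (x + part (Suc n) s) - g x)$c
        = (g (x + part n s + s') - g (x + part n s))$c + (g (x + part n s) - g x)$c"
      by (simp add: add.assoc)
    have "norm s' \<le> norm s"
      by (rule power2_le_imp_le) (auto simp: norm_sq_vec s'_def intro!: sum_mono)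
    moreover have "\<bar>(g (x + part n s + s') - g (x + part n s))$c\<bar> \<le> K * norm s'"
    proof (cases "n < N")
      case True
      then show ?thesis by (intro bound) (auto simp: supported_in_def s'_def)
    next
      case False
      then have "s' = 0" using blk by (auto simp: s'_def vec_eq_iff)
      then show ?thesis by simp
    qed
    ultimately have "\<bar>(g (x + part n s + s') - g (x + part n s))$c\<bar> \<le> K * norm s"
      using K by (meson mult_left_mono order_trans)
    then show ?case using split Suc.IH[of x] by (simp add: algebra_simps)
  qed
  show ?thesis
  proof (rule lipschitz_onI)
    fix x y :: "real^'n"
    have "part N (x - y) = x - y" using blk by (simp add: part_def vec_eq_iff)
    then have "dist (g x) (g y) = norm (g (y + part N (x - y)) - g y)" by (simp add: dist_norm)
    also have "\<dots> \<le> (\<Sum>c\<in>UNIV. \<bar>(g (y + part N (x - y)) - g y)$c\<bar>)" by (rule norm_le_l1_cart)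
    also have "\<dots> \<le> (\<Sum>c\<in>(UNIV::'n set). real N * K * dist x y)"
      using telescope by (intro sum_mono) (simp add: dist_norm)
    finally show "dist (g x) (g y) \<le> real CARD('n) * (real N * K) * dist x y" by simp
  qed (use K in simp)
qed

lemma convex_slope_across_hyperplane:
  fixes H :: "'a::real_inner \<Rightarrow> real"
  assumes cv: "convex_on UNIV H" and mn: "\<And>t. a \<bullet> t = 0 \<Longrightarrow> H 0 \<le> H t"
    and t1: "0 < a \<bullet> t1" and t2: "a \<bullet> t2 < 0"
  shows "(H t2 - H 0) / (a \<bullet> t2) \<le> (H t1 - H 0) / (a \<bullet> t1)"
proof -
  define b1 b2 where "b1 = a \<bullet> t1" and "b2 = a \<bullet> t2"
  define \<theta> where "\<theta> = b1 / (b1 - b2)"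
  have \<theta>: "0 \<le> \<theta>" "\<theta> \<le> 1" using t1 t2 by (auto simp: \<theta>_def b1_def b2_def field_simps)
  have "a \<bullet> ((1 - \<theta>) *\<^sub>R t1 + \<theta> *\<^sub>R t2) = (1 - \<theta>) * b1 + \<theta> * b2"
    by (simp add: inner_add_right b1_def b2_def)
  also have "\<dots> = 0" using t1 t2 by (simp add: \<theta>_def b1_def b2_def field_simps)
  finally have "H 0 \<le> H ((1 - \<theta>) *\<^sub>R t1 + \<theta> *\<^sub>R t2)" by (rule mn)
  also have "\<dots> \<le> (1 - \<theta>) * H t1 + \<theta> * H t2" using convex_onD[OF cv \<theta>] by simp
  finally have "(b1 - b2) * H 0 \<le> (b1 - b2) * ((1 - \<theta>) * H t1 + \<theta> * H t2)"
    using t1 t2 by (simp add: b1_def b2_def)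
  also have "\<dots> = - b2 * H t1 + b1 * H t2"
  proof -
    have "b1 - b2 \<noteq> 0" using t1 t2 by (simp add: b1_def b2_def)
    then have "(b1 - b2) * (1 - \<theta>) = - b2" "(b1 - b2) * \<theta> = b1"
      by (simp_all add: \<theta>_def right_diff_distrib)
    moreover have "(b1 - b2) * ((1 - \<theta>) * H t1 + \<theta> * H t2)
        = ((b1 - b2) * (1 - \<theta>)) * H t1 + ((b1 - b2) * \<theta>) * H t2"
      by algebra
    ultimately show ?thesis by simp
  qed
  finally have "b2 * (H t1 - H 0) \<le> b1 * (H t2 - H 0)" by (simp add: algebra_simps)
  then show ?thesis using t1 t2 unfolding b1_def b2_def by (simp add: field_simps)
qed

text \<open>The multiplier is the supremum of the difference quotients on the side a \<bullet> t < 0, which by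
  the previous lemma are dominated by those on the side a \<bullet> t > 0.\<close>
lemma convex_min_on_hyperplane_multiplier:
  fixes H :: "'a::real_inner \<Rightarrow> real"
  assumes a: "a \<noteq> 0" and cv: "convex_on UNIV H" and mn: "\<And>t. a \<bullet> t = 0 \<Longrightarrow> H 0 \<le> H t"
  shows "\<exists>lam. \<forall>t. H 0 - lam * (a \<bullet> t) \<le> H t"
proof -
  define S where "S = {(H t - H 0) / (a \<bullet> t) | t. a \<bullet> t < 0}"
  have up: "s \<le> (H t - H 0) / (a \<bullet> t)" if "s \<in> S" "0 < a \<bullet> t" for s t
    using that convex_slope_across_hyperplane[OF cv mn] unfolding S_def by blast
  have aa: "0 < a \<bullet> a" using a by simp
  then have ne: "S \<noteq> {}" unfolding S_def by (auto intro!: exI[of _ "-a"])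
  have bdd: "bdd_above S" by (rule bdd_aboveI[of _ "(H a - H 0) / (a \<bullet> a)"]) (use up[of _ a] aa in auto)
  have "H 0 + Sup S * (a \<bullet> t) \<le> H t" for t
  proof (cases "a \<bullet> t" "0::real" rule: linorder_cases)
    case less
    then have "(H t - H 0) / (a \<bullet> t) \<le> Sup S"
      by (intro cSup_upper[OF _ bdd]) (auto simp: S_def)
    then show ?thesis using less by (simp add: divide_le_eq)
  next
    case equal
    then show ?thesis using mn[of t] by simp
  next
    case greater
    then have "Sup S \<le> (H t - H 0) / (a \<bullet> t)" by (intro cSup_least[OF ne] up)
    then show ?thesis using greater by (simp add: le_divide_eq)
  qed
  then show ?thesis by (intro exI[of _ "- Sup S"]) simp
qed

section \<open>Combinatorics of pairs of blocks\<close>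

lemma sum_neg_part_eq_sum_pos_part:
  fixes \<alpha> :: "nat \<Rightarrow> real"
  assumes "(\<Sum>i<N. \<alpha> i) = 0"
  shows "(\<Sum>i<N. max (- \<alpha> i) 0) = (\<Sum>i<N. max (\<alpha> i) 0)"
proof -
  have "(\<Sum>i<N. max (- \<alpha> i) 0) = (\<Sum>i<N. max (\<alpha> i) 0 - \<alpha> i)"
    by (intro sum.cong) (auto simp: max_def)
  then show ?thesis using assms by (simp add: sum_subtractf)
qed

lemma abs_le_sum_pos_part:
  fixes \<alpha> :: "nat \<Rightarrow> real"
  assumes "(\<Sum>i<N. \<alpha> i) = 0" "j < N"
  shows "\<bar>\<alpha> j\<bar> \<le> (\<Sum>i<N. max (\<alpha> i) 0)"
proof -
  have "max (\<alpha> j) 0 \<le> (\<Sum>i<N. max (\<alpha> i) 0)" by (rule member_le_sum) (use assms in auto)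
  moreover have "max (- \<alpha> j) 0 \<le> (\<Sum>i<N. max (\<alpha> i) 0)"
    unfolding sum_neg_part_eq_sum_pos_part[OF assms(1), symmetric]
    by (rule member_le_sum) (use assms in auto)
  ultimately show ?thesis by linarith
qed

lemma sum_opposite_sign_eq_sum_pos_part:
  fixes \<alpha> :: "nat \<Rightarrow> real"
  assumes "(\<Sum>i<N. \<alpha> i) = 0" "\<alpha> i \<noteq> 0"
  shows "(\<Sum>j\<in>{..<N} - {i}. if \<alpha> i * \<alpha> j < 0 then \<bar>\<alpha> j\<bar> else 0) = (\<Sum>j<N. max (\<alpha> j) 0)"
proof -
  have "(\<Sum>j\<in>{..<N} - {i}. if \<alpha> i * \<alpha> j < 0 then \<bar>\<alpha> j\<bar> else 0)
      = (\<Sum>j<N. if \<alpha> i * \<alpha> j < 0 then \<bar>\<alpha> j\<bar> else 0)"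
    by (intro sum.mono_neutral_left) (auto simp: mult_less_0_iff)
  also have "\<dots> = (if 0 < \<alpha> i then \<Sum>j<N. max (- \<alpha> j) 0 else \<Sum>j<N. max (\<alpha> j) 0)"
    using assms(2) by (auto intro!: sum.cong simp: mult_less_0_iff max_def)
  finally show ?thesis using sum_neg_part_eq_sum_pos_part[OF assms(1)] by simp
qed

text \<open>A block with \<alpha> i \<noteq> 0 is paired only with blocks of opposite sign, in proportion to their
  weight; a block with \<alpha> i = 0 is paired uniformly with all others.\<close>
lemma pair_weights_exist:
  fixes \<alpha> :: "nat \<Rightarrow> real"
  assumes N: "2 \<le> N" and sum0: "(\<Sum>i<N. \<alpha> i) = 0" and cc: "0 \<le> cc"
  obtains \<theta> where "\<And>i j. i < N \<Longrightarrow> j < N \<Longrightarrow> 0 \<le> \<theta> i j \<and> \<theta> i j \<le> cc"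
    and "\<And>i j. \<theta> i j * \<alpha> i + \<theta> j i * \<alpha> j = 0"
    and "\<And>i. i < N \<Longrightarrow> (\<Sum>j\<in>{..<N} - {i}. \<theta> i j) = cc"
proof -
  define P where "P = (\<Sum>i<N. max (\<alpha> i) 0)"
  have le_P: "\<bar>\<alpha> j\<bar> \<le> P" if "j < N" for j
    unfolding P_def using sum0 that by (rule abs_le_sum_pos_part)
  have opposite: "(\<Sum>j\<in>{..<N} - {i}. if \<alpha> i * \<alpha> j < 0 then \<bar>\<alpha> j\<bar> else 0) = P"
    if "\<alpha> i \<noteq> 0" for i
    unfolding P_def using sum0 that by (rule sum_opposite_sign_eq_sum_pos_part)
  define \<theta> where "\<theta> i j = (if \<alpha> i = 0 then cc / (real N - 1)
      else if \<alpha> i * \<alpha> j < 0 then cc * \<bar>\<alpha> j\<bar> / P else 0)" for i j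
  show thesis
  proof (rule that[of \<theta>])
    fix i j assume ij: "i < N" "j < N"
    show "0 \<le> \<theta> i j \<and> \<theta> i j \<le> cc"
    proof (cases "\<alpha> i = 0")
      case True
      have "cc / (real N - 1) \<le> cc / 1" using N cc by (intro divide_left_mono) auto
      then show ?thesis using True N cc by (simp add: \<theta>_def)
    next
      case False
      have "0 < P" using le_P[OF ij(1)] False by linarith
      then have "cc * \<bar>\<alpha> j\<bar> / P \<le> cc"
        using le_P[OF ij(2)] cc by (simp add: divide_le_eq mult_left_mono)
      then show ?thesis using False cc \<open>0 < P\<close> by (simp add: \<theta>_def)
    qed
  next
    fix i j
    show "\<theta> i j * \<alpha> i + \<theta> j i * \<alpha> j = 0"
    proof (cases "\<alpha> i * \<alpha> j < 0")
      case True
      then have "\<bar>\<alpha> j\<bar> * \<alpha> i + \<bar>\<alpha> i\<bar> * \<alpha> j = 0"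
        by (cases "0 < \<alpha> i") (auto simp: mult_less_0_iff)
      moreover have "cc * \<bar>\<alpha> j\<bar> / P * \<alpha> i + cc * \<bar>\<alpha> i\<bar> / P * \<alpha> j
          = cc / P * (\<bar>\<alpha> j\<bar> * \<alpha> i + \<bar>\<alpha> i\<bar> * \<alpha> j)"
        by (simp add: divide_inverse algebra_simps)
      ultimately have "cc * \<bar>\<alpha> j\<bar> / P * \<alpha> i + cc * \<bar>\<alpha> i\<bar> / P * \<alpha> j = 0"
        by simp
      then show ?thesis using True by (auto simp: \<theta>_def mult.commute)
    next
      case False
      then have "\<not> \<alpha> j * \<alpha> i < 0" by (simp add: mult.commute)
      then show ?thesis using False by (auto simp: \<theta>_def)
    qed
  next
    fix i assume i: "i < N"
    show "(\<Sum>j\<in>{..<N} - {i}. \<theta> i j) = cc"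
    proof (cases "\<alpha> i = 0")
      case True
      have "card ({..<N} - {i}) = N - 1" using i by simp
      then show ?thesis using True N by (simp add: \<theta>_def of_nat_diff)
    next
      case False
      have "(\<Sum>j\<in>{..<N} - {i}. \<theta> i j)
          = cc / P * (\<Sum>j\<in>{..<N} - {i}. if \<alpha> i * \<alpha> j < 0 then \<bar>\<alpha> j\<bar> else 0)"
        unfolding sum_distrib_left using False by (intro sum.cong) (auto simp: \<theta>_def)
      moreover have "0 < P" using le_P[OF i] False by linarith
      ultimately show ?thesis using opposite[OF False] by simp
    qed
  qed
qed

lemma sum_ordered_pairs_eq_twice_sum_pairs:
  fixes G :: "nat set \<Rightarrow> real"
  shows "(\<Sum>i<N. \<Sum>j\<in>{..<N} - {i}. G {i, j})
       = 2 * (\<Sum>p\<in>{{i, j} | i j. i < N \<and> j < N \<and> i \<noteq> j}. G p)"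
proof -
  define U1 where "U1 = {(i, j). i < j \<and> j < N}"
  define U2 where "U2 = {(i, j). j < i \<and> i < (N::nat)}"
  have fin: "finite U1" "finite U2"
    by (rule finite_subset[of _ "{..<N} \<times> {..<N}"], auto simp: U1_def U2_def)+
  have U: "Sigma {..<N} (\<lambda>i. {..<N} - {i}) = U1 \<union> U2" by (auto simp: U1_def U2_def)
  have "(\<Sum>i<N. \<Sum>j\<in>{..<N} - {i}. G {i, j}) = (\<Sum>(i, j)\<in>U1 \<union> U2. G {i, j})"
    unfolding U[symmetric] by (rule sum.Sigma) auto
  also have "\<dots> = (\<Sum>(i, j)\<in>U1. G {i, j}) + (\<Sum>(i, j)\<in>U2. G {i, j})"
    by (rule sum.union_disjoint) (use fin in \<open>auto simp: U1_def U2_def\<close>)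
  also have "(\<Sum>(i, j)\<in>U2. G {i, j}) = (\<Sum>(i, j)\<in>U1. G {i, j})"
    by (rule sum.reindex_bij_witness[of _ prod.swap prod.swap]) (auto simp: U1_def U2_def insert_commute)
  also have "(\<Sum>(i, j)\<in>U1. G {i, j}) = (\<Sum>p\<in>{{i, j} | i j. i < N \<and> j < N \<and> i \<noteq> j}. G p)"
  proof (rule sum.reindex_bij_witness[of _ "\<lambda>p. (Min p, Max p)" "\<lambda>(i, j). {i, j}"])
    fix p assume "p \<in> {{i, j} | i j. i < N \<and> j < N \<and> i \<noteq> j}"
    then obtain i j where "p = {i, j}" "i < N" "j < N" "i \<noteq> j" by blast
    then show "(case (Min p, Max p) of (i, j) \<Rightarrow> {i, j}) = p" "(Min p, Max p) \<in> U1"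
      by (auto simp: U1_def min_def max_def)
  qed (auto simp: U1_def min_def max_def intro!: exI)
  finally show ?thesis by simp
qed

lemma sum_offdiag_swap:
  fixes N :: nat
  shows "(\<Sum>i<N. \<Sum>j\<in>{..<N} - {i}. H i j) = (\<Sum>i<N. \<Sum>j\<in>{..<N} - {i}. H j i :: real)"
proof -
  have offdiag: "(\<Sum>j<N. if i = j then 0 else G j) = (\<Sum>j\<in>{..<N} - {i}. G j :: real)" for i G
    by (rule sum.mono_neutral_cong_right) auto
  have "(\<Sum>i<N. \<Sum>j<N. if i = j then 0 else H i j) = (\<Sum>j<N. \<Sum>i<N. if i = j then 0 else H i j)"
    by (rule sum.swap)
  then show ?thesis by (simp add: offdiag eq_commute)
qed

lemma sum_if_two_blocks:
  fixes blk :: "'n::finite \<Rightarrow> nat"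
  assumes "i \<noteq> j"
  shows "(\<Sum>c\<in>UNIV. if blk c = i then A c else if blk c = j then B c else 0)
       = (\<Sum>c\<in>{c. blk c = i}. A c) + (\<Sum>c\<in>{c. blk c = j}. B c :: real)"
proof -
  have "(\<Sum>c\<in>UNIV. if blk c = i then A c else if blk c = j then B c else 0)
      = (\<Sum>c\<in>UNIV. (if blk c = i then A c else 0) + (if blk c = j then B c else 0))"
    using assms by (intro sum.cong) auto
  also have "\<dots> = (\<Sum>c\<in>UNIV. if blk c = i then A c else 0) + (\<Sum>c\<in>UNIV. if blk c = j then B c else 0)"
    by (rule sum.distrib)
  also have "\<dots> = (\<Sum>c\<in>{c. blk c = i}. A c) + (\<Sum>c\<in>{c. blk c = j}. B c)"
    by (simp add: sum.inter_filter[symmetric])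
  finally show ?thesis .
qed

section \<open>Randomised descent iterations\<close>

primrec random_iter :: "('x \<Rightarrow> 'p \<Rightarrow> 'x) \<Rightarrow> 'x \<Rightarrow> 'p stream \<Rightarrow> nat \<Rightarrow> 'x" where
  "random_iter T x \<omega> 0 = x"
| "random_iter T x \<omega> (Suc k) = T (random_iter T x \<omega> k) (\<omega> !! k)"

lemma random_iter_Cons_Suc: "random_iter T x (p ## \<omega>) (Suc k) = random_iter T (T x p) \<omega> k"
  by (induction k) auto

lemma AE_stream_in_pmf_of_set:
  assumes "finite P" "P \<noteq> {}"
  shows "AE \<omega> in stream_space (measure_pmf (pmf_of_set P)). \<forall>k. \<omega> !! k \<in> P"
proof -
  have "AE \<omega> in stream_space (measure_pmf (pmf_of_set P)). stream_all (\<lambda>p. p \<in> P) \<omega>"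
    by (rule prob_space.AE_stream_all[OF prob_space_measure_pmf])
       (use assms in \<open>auto simp: AE_measure_pmf_iff\<close>)
  then show ?thesis unfolding stream_all_def .
qed

text \<open>On streams over an uncountable set, measurability of the iterates relies on each step
  taking only finitely many values.\<close>
lemma measurable_random_iter:
  assumes fin: "\<And>x. finite (range (T x))"
  shows "(\<lambda>\<omega>. \<phi> (random_iter T x \<omega> k) :: real) \<in> borel_measurable (stream_space (measure_pmf Q))"
proof (induction k arbitrary: x \<phi>)
  case 0
  then show ?case by simp
next
  case (Suc k)
  have "(\<lambda>\<omega>. \<phi> (random_iter T x \<omega> (Suc k)))
      = (\<lambda>\<omega>. \<Sum>y\<in>range (T x). if T x (shd \<omega>) = y then \<phi> (random_iter T y (stl \<omega>) k) else 0)"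
  proof
    fix \<omega> :: "'b stream"
    have "\<phi> (random_iter T x \<omega> (Suc k)) = \<phi> (random_iter T (T x (shd \<omega>)) (stl \<omega>) k)"
      using random_iter_Cons_Suc[of T x "shd \<omega>" "stl \<omega>" k] by simp
    then show "\<phi> (random_iter T x \<omega> (Suc k))
        = (\<Sum>y\<in>range (T x). if T x (shd \<omega>) = y then \<phi> (random_iter T y (stl \<omega>) k) else 0)"
      using fin by (simp add: sum.delta)
  qed
  moreover have "{\<omega> \<in> space (stream_space (measure_pmf Q)). T x (shd \<omega>) = y}
      \<in> sets (stream_space (measure_pmf Q))" for y
  proof -
    have "shd -` {p. T x p = y} \<inter> space (stream_space (measure_pmf Q)) \<in> sets (stream_space (measure_pmf Q))"
      by (rule measurable_sets[OF measurable_shd]) simp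
    then show ?thesis by (simp add: vimage_def Int_def conj_commute)
  qed
  ultimately show ?case
    by (auto intro!: borel_measurable_sum measurable_If measurable_compose[OF measurable_stl Suc.IH])
qed

lemma nn_integral_pmf_of_set_ennreal:
  assumes "finite P" "P \<noteq> {}" "\<And>p. p \<in> P \<Longrightarrow> 0 \<le> h p"
  shows "(\<integral>\<^sup>+p. ennreal (h p) \<partial>measure_pmf (pmf_of_set P)) = ennreal ((\<Sum>p\<in>P. h p) / card P)"
proof -
  have "(\<integral>\<^sup>+p. ennreal (h p) \<partial>measure_pmf (pmf_of_set P)) = (\<Sum>p\<in>P. ennreal (h p)) / ennreal (card P)"
    unfolding nn_integral_pmf_of_set[OF assms(2,1)] by (simp only: ennreal_of_nat_eq_real_of_nat)
  also have "\<dots> = ennreal ((\<Sum>p\<in>P. h p) / card P)"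
    using assms by (simp add: sum_ennreal divide_ennreal sum_nonneg card_gt_0_iff)
  finally show ?thesis .
qed

lemma nn_integral_sum_random_iter_Suc:
  fixes m :: "'x \<Rightarrow> real" and Q :: "'p pmf"
  defines "M \<equiv> stream_space (measure_pmf Q)"
  assumes fin: "\<And>x. finite (range (T x))"
  shows "(\<integral>\<^sup>+\<omega>. (\<Sum>k<Suc n. ennreal (m (random_iter T x \<omega> k))) \<partial>M)
       = (\<integral>\<^sup>+p. ennreal (m x) + (\<integral>\<^sup>+\<omega>. (\<Sum>k<n. ennreal (m (random_iter T (T x p) \<omega> k))) \<partial>M) \<partial>Q)"
proof -
  interpret S: prob_space M
    unfolding M_def by (rule prob_space.prob_space_stream_space[OF prob_space_measure_pmf])
  have meas: "(\<lambda>\<omega>. \<Sum>k<j. ennreal (m (random_iter T y \<omega> k))) \<in> borel_measurable M" for j y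
    unfolding M_def by (intro borel_measurable_sum measurable_compose[OF measurable_random_iter[OF fin]]
        measurable_ennreal)
  have "(\<integral>\<^sup>+\<omega>. (\<Sum>k<Suc n. ennreal (m (random_iter T x \<omega> k))) \<partial>M)
      = (\<integral>\<^sup>+p. (\<integral>\<^sup>+\<omega>. (\<Sum>k<Suc n. ennreal (m (random_iter T x (p ## \<omega>) k))) \<partial>M) \<partial>Q)"
    unfolding M_def by (rule prob_space.nn_integral_stream_space[OF prob_space_measure_pmf])
      (use meas[of x "Suc n"] in \<open>simp only: M_def\<close>)
  also have "\<dots> = (\<integral>\<^sup>+p. (\<integral>\<^sup>+\<omega>. ennreal (m x) + (\<Sum>k<n. ennreal (m (random_iter T (T x p) \<omega> k))) \<partial>M) \<partial>Q)"
    unfolding sum.lessThan_Suc_shift random_iter_Cons_Suc random_iter.simps(1) ..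
  also have "\<dots> = (\<integral>\<^sup>+p. ennreal (m x) + (\<integral>\<^sup>+\<omega>. (\<Sum>k<n. ennreal (m (random_iter T (T x p) \<omega> k))) \<partial>M) \<partial>Q)"
    using meas by (simp add: nn_integral_add S.emeasure_space_1)
  finally show ?thesis .
qed

lemma nn_integral_sum_random_iter_le:
  fixes V m :: "'x \<Rightarrow> real" and P :: "'p set"
  defines "M \<equiv> stream_space (measure_pmf (pmf_of_set P))"
  assumes P: "finite P" "P \<noteq> {}" and fin: "\<And>x. finite (range (T x))"
    and inv: "\<And>x p. x \<in> S \<Longrightarrow> p \<in> P \<Longrightarrow> T x p \<in> S"
    and low: "\<And>x. x \<in> S \<Longrightarrow> Vmin \<le> V x"
    and m_nonneg: "\<And>x. 0 \<le> m x" and m: "\<And>x. x \<in> S \<Longrightarrow> m x \<le> C * (\<Sum>p\<in>P. V x - V (T x p))"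
    and C: "0 \<le> C" and x: "x \<in> S"
  shows "(\<integral>\<^sup>+\<omega>. (\<Sum>k<n. ennreal (m (random_iter T x \<omega> k))) \<partial>M) \<le> ennreal (C * card P * (V x - Vmin))"
  using x
proof (induction n arbitrary: x)
  case 0
  then show ?case by simp
next
  case (Suc n)
  define K where "K = real (card P)"
  have K: "0 < K" using P by (simp add: K_def card_gt_0_iff)
  define h where "h p = m x + C * K * (V (T x p) - Vmin)" for p
  have h: "0 \<le> h p" if "p \<in> P" for p
    using C K low[OF inv[OF Suc.prems that]] m_nonneg[of x] by (simp add: h_def)
  have "(\<integral>\<^sup>+\<omega>. (\<Sum>k<Suc n. ennreal (m (random_iter T x \<omega> k))) \<partial>M)
      = (\<integral>\<^sup>+p. ennreal (m x) + (\<integral>\<^sup>+\<omega>. (\<Sum>k<n. ennreal (m (random_iter T (T x p) \<omega> k))) \<partial>M)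
          \<partial>measure_pmf (pmf_of_set P))"
    unfolding M_def by (rule nn_integral_sum_random_iter_Suc[OF fin])
  also have "\<dots> \<le> (\<integral>\<^sup>+p. ennreal (h p) \<partial>measure_pmf (pmf_of_set P))"
  proof (rule nn_integral_mono_AE, unfold AE_measure_pmf_iff set_pmf_of_set[OF P(2,1)], intro ballI)
    fix p assume p: "p \<in> P"
    have "ennreal (m x) + (\<integral>\<^sup>+\<omega>. (\<Sum>k<n. ennreal (m (random_iter T (T x p) \<omega> k))) \<partial>M)
        \<le> ennreal (m x) + ennreal (C * K * (V (T x p) - Vmin))"
      using Suc.IH[OF inv[OF Suc.prems p]] by (simp add: K_def add_left_mono)
    also have "\<dots> = ennreal (h p)"
      using C K low[OF inv[OF Suc.prems p]] m_nonneg by (simp add: h_def ennreal_plus)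
    finally show "ennreal (m x) + (\<integral>\<^sup>+\<omega>. (\<Sum>k<n. ennreal (m (random_iter T (T x p) \<omega> k))) \<partial>M)
        \<le> ennreal (h p)" .
  qed
  also have "\<dots> = ennreal ((\<Sum>p\<in>P. h p) / K)"
    unfolding K_def by (rule nn_integral_pmf_of_set_ennreal[OF P h])
  also have "\<dots> \<le> ennreal (C * K * (V x - Vmin))"
  proof (rule ennreal_leI)
    have "(\<Sum>p\<in>P. h p) / K = m x + C * (\<Sum>p\<in>P. V (T x p) - Vmin)"
      using K unfolding h_def sum.distrib sum_distrib_left[symmetric] by (simp add: K_def field_simps)
    also have "\<dots> \<le> C * (\<Sum>p\<in>P. V x - V (T x p)) + C * (\<Sum>p\<in>P. V (T x p) - Vmin)"
      using m[OF Suc.prems] by simp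
    also have "\<dots> = C * K * (V x - Vmin)"
      by (simp add: K_def sum_subtractf algebra_simps)
    finally show "(\<Sum>p\<in>P. h p) / K \<le> C * K * (V x - Vmin)" .
  qed
  finally show ?case by (simp add: K_def)
qed

lemma AE_summable_random_iter:
  fixes V m :: "'x \<Rightarrow> real" and P :: "'p set"
  defines "M \<equiv> stream_space (measure_pmf (pmf_of_set P))"
  assumes P: "finite P" "P \<noteq> {}" and fin: "\<And>x. finite (range (T x))"
    and inv: "\<And>x p. x \<in> S \<Longrightarrow> p \<in> P \<Longrightarrow> T x p \<in> S"
    and low: "\<And>x. x \<in> S \<Longrightarrow> Vmin \<le> V x"
    and m_nonneg: "\<And>x. 0 \<le> m x" and m: "\<And>x. x \<in> S \<Longrightarrow> m x \<le> C * (\<Sum>p\<in>P. V x - V (T x p))"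
    and C: "0 \<le> C" and x: "x \<in> S"
  shows "AE \<omega> in M. summable (\<lambda>k. m (random_iter T x \<omega> k))"
proof -
  have meas: "(\<lambda>\<omega>. ennreal (m (random_iter T x \<omega> k))) \<in> borel_measurable M" for k
    unfolding M_def by (rule measurable_compose[OF measurable_random_iter[OF fin] measurable_ennreal])
  have "(\<integral>\<^sup>+\<omega>. (\<Sum>k. ennreal (m (random_iter T x \<omega> k))) \<partial>M)
      = (SUP n. \<Sum>k<n. \<integral>\<^sup>+\<omega>. ennreal (m (random_iter T x \<omega> k)) \<partial>M)"
    unfolding nn_integral_suminf[OF meas] by (rule suminf_eq_SUP)
  also have "\<dots> = (SUP n. \<integral>\<^sup>+\<omega>. (\<Sum>k<n. ennreal (m (random_iter T x \<omega> k))) \<partial>M)"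
    by (simp add: nn_integral_sum[OF meas])
  also have "\<dots> \<le> ennreal (C * card P * (V x - Vmin))"
    unfolding M_def
    by (intro SUP_least nn_integral_sum_random_iter_le[OF P fin inv low m_nonneg m C x]) auto
  finally have "(\<integral>\<^sup>+\<omega>. (\<Sum>k. ennreal (m (random_iter T x \<omega> k))) \<partial>M) \<noteq> \<infinity>"
    using neq_top_trans[OF ennreal_neq_top] by simp
  then have "AE \<omega> in M. (\<Sum>k. ennreal (m (random_iter T x \<omega> k))) \<noteq> \<infinity>"
    using meas by (intro nn_integral_PInf_AE) auto
  then show ?thesis by eventually_elim (auto intro: summable_suminf_not_top m_nonneg)
qed

section \<open>The 2-RCD method\<close>

locale rcd_problem =
  fixes f :: "real^'n::finite \<Rightarrow> real" and g :: "real^'n \<Rightarrow> real^'n"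
    and hc :: "'n \<Rightarrow> real \<Rightarrow> real" and blk :: "'n \<Rightarrow> nat" and N :: nat
    and L :: "nat \<Rightarrow> nat \<Rightarrow> real" and a :: "real^'n"
  assumes N2: "N \<ge> 2" and blocks: "blk ` UNIV = {..<N}"
    and grad: "\<forall>x. (f has_derivative (\<lambda>v. g x \<bullet> v)) (at x)"
    and Lpos: "\<forall>i<N. \<forall>j<N. L i j = L j i \<and> L i j > 0"
    and Lip: "\<forall>i<N. \<forall>j<N. \<forall>x s. supported_in blk {i, j} s \<longrightarrow>
               blk_norm blk {i, j} (g (x + s) - g x) \<le> L i j * norm s"
    and hconv: "\<forall>c. convex_on UNIV (hc c)"
begin

definition F :: "real^'n \<Rightarrow> real" where
  "F x = f x + sep_fun hc x"

definition pair_model :: "nat \<Rightarrow> nat \<Rightarrow> real^'n \<Rightarrow> real^'n \<Rightarrow> real" where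
  "pair_model i j x t = f x + g x \<bullet> t + L i j / 2 * (norm t)^2 + sep_fun hc (x + t)"

definition pair_dirs :: "nat \<Rightarrow> nat \<Rightarrow> (real^'n) set" where
  "pair_dirs i j = {t. supported_in blk {i, j} t \<and> a \<bullet> t = 0}"

definition NGamma :: "nat \<Rightarrow> real" where
  "NGamma i = real N * Gamma N L i"

definition dN :: "real^'n \<Rightarrow> real^'n" where
  "dN x = d_Lam f g hc blk a NGamma x"

definition full_model :: "real^'n \<Rightarrow> real^'n \<Rightarrow> real" where
  "full_model x t = f x + g x \<bullet> t + 1/2 * (wnorm blk NGamma t)^2 + sep_fun hc (x + t)"

definition pairs :: "nat set set" where
  "pairs = {{i, j} | i j. i < N \<and> j < N \<and> i \<noteq> j}"

definition step :: "real^'n \<Rightarrow> nat set \<Rightarrow> real^'n" where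
  "step x p = x + rcd_dir f g hc L blk a x (Min p) (Max p)"

definition coord_gain :: "real \<Rightarrow> real^'n \<Rightarrow> 'n \<Rightarrow> real \<Rightarrow> real" where
  "coord_gain l x c \<tau> = g x $ c * \<tau> + l / 2 * \<tau>^2 + (hc c (x$c + \<tau>) - hc c (x$c))"

lemma blk_less_N: "blk c < N"
  using blocks by auto

lemma sum_blocks: "(\<Sum>i<N. \<Sum>c\<in>{c. blk c = i}. q c) = (\<Sum>c\<in>UNIV. q c)"
proof -
  have "(\<Sum>c\<in>UNIV. q c) = (\<Sum>i\<in>blk ` UNIV. \<Sum>c\<in>{c\<in>UNIV. blk c = i}. q c)"
    by (rule sum.image_gen) simp
  then show ?thesis using blocks by simp
qed

lemma Gamma_pos: "i < N \<Longrightarrow> 0 < Gamma N L i"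
proof -
  assume "i < N"
  then have "0 < (\<Sum>j<N. L i j)" using N2 Lpos by (intro sum_pos) auto
  then show ?thesis using N2 by (simp add: Gamma_def)
qed

lemma NGamma_pos: "i < N \<Longrightarrow> 0 < NGamma i"
  using Gamma_pos N2 by (simp add: NGamma_def)

lemma wnorm_NGamma_sq: "(wnorm blk NGamma t)^2 = (\<Sum>c\<in>UNIV. NGamma (blk c) * (t$c)^2)"
  using NGamma_pos[OF blk_less_N] by (simp add: wnorm_def sum_nonneg less_imp_le)

lemma subspace_pair_dirs: "subspace (pair_dirs i j)"
  unfolding subspace_def pair_dirs_def supported_in_def by (auto simp: inner_add_right)

lemma rcd_dir_optimal:
  assumes "i < N" "j < N"
  shows "rcd_dir f g hc L blk a x i j \<in> pair_dirs i j \<and>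
         (\<forall>t\<in>pair_dirs i j. pair_model i j x (rcd_dir f g hc L blk a x i j) \<le> pair_model i j x t)"
proof -
  have "\<exists>!s. s \<in> pair_dirs i j \<and> (\<forall>t\<in>pair_dirs i j. pair_model i j x s \<le> pair_model i j x t)"
    using assms Lpos hconv
    by (intro ex1_argmin_quadratic_sep_fun[OF subspace_pair_dirs, of "\<lambda>c. L i j / 2"])
       (auto simp: pair_model_def norm_sq_vec sum_distrib_left)
  from theI'[OF this[unfolded pair_dirs_def, simplified]] show ?thesis
    unfolding rcd_dir_def Let_def pair_dirs_def by (simp add: pair_model_def[abs_def])
qed

lemma dN_optimal: "a \<bullet> dN x = 0 \<and> (\<forall>t. a \<bullet> t = 0 \<longrightarrow> full_model x (dN x) \<le> full_model x t)"
proof -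
  have "subspace {t. a \<bullet> t = (0::real)}"
    unfolding subspace_def by (auto simp: inner_add_right)
  then have "\<exists>!s. s \<in> {t. a \<bullet> t = 0} \<and> (\<forall>t\<in>{t. a \<bullet> t = 0}. full_model x s \<le> full_model x t)"
    using NGamma_pos[OF blk_less_N] hconv
    by (intro ex1_argmin_quadratic_sep_fun[of _ "\<lambda>c. NGamma (blk c) / 2"])
       (auto simp: full_model_def wnorm_NGamma_sq sum_divide_distrib)
  from theI'[OF this[simplified]] show ?thesis
    unfolding dN_def d_Lam_def Let_def by (simp add: full_model_def[abs_def])
qed

lemma pairs_finite: "finite pairs"
  by (rule finite_subset[of _ "Pow {..<N}"]) (auto simp: pairs_def)

lemma zero_one_in_pairs: "{0, 1} \<in> pairs"
  using N2 unfolding pairs_def by force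

lemma pairsE:
  assumes "p \<in> pairs"
  obtains i j where "p = {i, j}" "i < N" "j < N" "i \<noteq> j"
  using assms unfolding pairs_def by blast

lemma step_le_pair_model:
  assumes ij: "i < N" "j < N"
  shows "a \<bullet> step x {i, j} = a \<bullet> x" and "t \<in> pair_dirs i j \<Longrightarrow> F (step x {i, j}) \<le> pair_model i j x t"
proof -
  define m M where "m = min i j" and "M = max i j"
  have mM: "m < N" "M < N" "{m, M} = {i, j}" using ij by (auto simp: m_def M_def)
  have same: "pair_dirs m M = pair_dirs i j" "pair_model m M = pair_model i j"
    using mM(3) ij Lpos by (auto simp: pair_dirs_def pair_model_def[abs_def] m_def M_def max_def min_def)
  define d where "d = rcd_dir f g hc L blk a x m M"
  have step: "step x {i, j} = x + d" by (simp add: step_def d_def m_def M_def min_def max_def)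
  note opt = rcd_dir_optimal[OF mM(1,2), of x, folded d_def, unfolded same]
  then show "a \<bullet> step x {i, j} = a \<bullet> x" by (simp add: step pair_dirs_def inner_add_right)
  assume t: "t \<in> pair_dirs i j"
  have "supported_in blk {m, M} d" using opt mM(3) by (simp add: pair_dirs_def)
  moreover have "\<forall>x s. supported_in blk {m, M} s \<longrightarrow> blk_norm blk {m, M} (g (x + s) - g x) \<le> L m M * norm s"
    using Lip mM by blast
  ultimately have "f (x + d) \<le> f x + g x \<bullet> d + L m M / 2 * (norm d)^2"
    using block_descent_lemma[OF grad] by blast
  then have "F (step x {i, j}) \<le> pair_model m M x d" by (simp add: F_def step pair_model_def)
  also have "\<dots> \<le> pair_model m M x t" using opt t by (simp add: same)
  finally show "F (step x {i, j}) \<le> pair_model i j x t" by (simp add: same)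
qed

lemma inner_step: "p \<in> pairs \<Longrightarrow> a \<bullet> step x p = a \<bullet> x"
  by (erule pairsE) (simp add: step_le_pair_model(1))

lemma F_step_le: "p \<in> pairs \<Longrightarrow> F (step x p) \<le> F x"
proof (erule pairsE)
  fix i j assume "p = {i, j}" "i < N" "j < N"
  moreover have "0 \<in> pair_dirs i j" by (simp add: pair_dirs_def supported_in_def)
  ultimately show ?thesis using step_le_pair_model(2)[of i j 0 x] by (simp add: pair_model_def F_def)
qed

lemma coord_gain_0 [simp]: "coord_gain l x c 0 = 0"
  by (simp add: coord_gain_def)

lemma coord_gain_split: "coord_gain l x c \<tau> = coord_gain 0 x c \<tau> + l / 2 * \<tau>^2"
  by (simp add: coord_gain_def)

lemma coord_gain_scale_le:
  assumes l: "0 \<le> l" and s: "0 \<le> s" "s \<le> 1"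
  shows "coord_gain l x c (s * \<tau>) \<le> s * coord_gain l x c \<tau>"
proof -
  have "hc c ((1 - s) *\<^sub>R x$c + s *\<^sub>R (x$c + \<tau>)) \<le> (1 - s) * hc c (x$c) + s * hc c (x$c + \<tau>)"
    using s by (intro convex_onD[OF hconv[rule_format]]) auto
  moreover have "s^2 * (l / 2 * \<tau>^2) \<le> s * (l / 2 * \<tau>^2)"
    using l s by (intro mult_right_mono) (auto simp: power2_eq_square mult_left_le)
  ultimately show ?thesis by (simp add: coord_gain_def algebra_simps power_mult_distrib)
qed

lemma sum_coord_gain_0: "(\<Sum>c\<in>UNIV. coord_gain 0 x c (t$c)) = g x \<bullet> t + sep_fun hc (x + t) - sep_fun hc x"
  by (simp add: coord_gain_def sep_fun_def inner_vec_def sum.distrib sum_subtractf)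

lemma pair_model_eq: "pair_model i j x t = F x + (\<Sum>c\<in>UNIV. coord_gain (L i j) x c (t$c))"
  unfolding coord_gain_split[of "L i j"]
  by (simp add: sum.distrib sum_coord_gain_0 pair_model_def F_def norm_sq_vec sum_distrib_left)

lemma sum_coord_gain_dN_le:
  assumes lm: "\<forall>i<N. lm \<le> NGamma i"
  shows "(\<Sum>c\<in>UNIV. coord_gain 0 x c (dN x $ c)) \<le> - (lm / 2 * (norm (dN x))^2)"
proof -
  have "full_model x (dN x) \<le> full_model x 0" using dN_optimal by simp
  moreover have "lm * (norm (dN x))^2 \<le> (wnorm blk NGamma (dN x))^2"
    unfolding wnorm_NGamma_sq norm_sq_vec sum_distrib_left
    using lm blk_less_N by (intro sum_mono mult_right_mono) auto
  ultimately show ?thesis by (simp add: full_model_def sum_coord_gain_0 wnorm_NGamma_sq)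
qed

lemma sum_coord_gain_scaled_le:
  assumes "0 \<le> l" "0 \<le> s" "s \<le> 1"
  shows "(\<Sum>c\<in>UNIV. coord_gain l x c (s * d$c))
       \<le> s * (\<Sum>c\<in>UNIV. coord_gain 0 x c (d$c)) + l / 2 * s^2 * (norm d)^2"
proof -
  have "(\<Sum>c\<in>UNIV. coord_gain l x c (s * d$c))
      = (\<Sum>c\<in>UNIV. coord_gain 0 x c (s * d$c)) + l / 2 * s^2 * (norm d)^2"
    unfolding coord_gain_split[of l] norm_sq_vec
    by (simp add: sum.distrib sum_distrib_left power_mult_distrib algebra_simps)
  moreover have "(\<Sum>c\<in>UNIV. coord_gain 0 x c (s * d$c)) \<le> s * (\<Sum>c\<in>UNIV. coord_gain 0 x c (d$c))"
    unfolding sum_distrib_left using assms by (intro sum_mono coord_gain_scale_le) auto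
  ultimately show ?thesis by linarith
qed

definition block_gain :: "real \<Rightarrow> real^'n \<Rightarrow> real^'n \<Rightarrow> nat \<Rightarrow> real \<Rightarrow> real" where
  "block_gain l x d i s = (\<Sum>c\<in>{c. blk c = i}. coord_gain l x c (s * d$c))"

lemma sum_block_gain: "(\<Sum>i<N. block_gain l x d i s) = (\<Sum>c\<in>UNIV. coord_gain l x c (s * d$c))"
  unfolding block_gain_def by (rule sum_blocks)

lemma sum_block_gain_le:
  assumes l: "0 \<le> l" and cc: "0 < cc" and w: "\<And>j. j \<in> J \<Longrightarrow> 0 \<le> w j \<and> w j \<le> cc"
    and sum_w: "(\<Sum>j\<in>J. w j) = cc"
  shows "(\<Sum>j\<in>J. block_gain l x d i (w j)) \<le> block_gain l x d i cc"
proof -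
  have "block_gain l x d i (w j) \<le> w j / cc * block_gain l x d i cc" if "j \<in> J" for j
  proof -
    have s: "0 \<le> w j / cc" "w j / cc \<le> 1" using w[OF that] cc by auto
    have "coord_gain l x c (w j / cc * (cc * d$c)) \<le> w j / cc * coord_gain l x c (cc * d$c)" for c
      by (rule coord_gain_scale_le[OF l s])
    then show ?thesis using cc unfolding block_gain_def sum_distrib_left by (intro sum_mono) simp
  qed
  then have "(\<Sum>j\<in>J. block_gain l x d i (w j)) \<le> (\<Sum>j\<in>J. w j / cc * block_gain l x d i cc)"
    by (rule sum_mono)
  also have "\<dots> = block_gain l x d i cc"
    using sum_w cc by (simp add: sum_distrib_right[symmetric] sum_divide_distrib[symmetric])
  finally show ?thesis .
qed

text \<open>d is cut into feasible directions t i j on pairs of blocks, where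
  block i receives the share \<theta> i j of its part of d. Convexity of coord_gain in \<tau> bounds
  the total model gain of these pair directions by twice the gain of cc \<cdot> d.\<close>
lemma pair_gain_decomposition:
  assumes ad: "a \<bullet> d = 0" and l: "0 \<le> l" and cc: "0 < cc" "cc \<le> 1"
  obtains t where "\<And>i j. i < N \<Longrightarrow> j < N \<Longrightarrow> i \<noteq> j \<Longrightarrow> t i j \<in> pair_dirs i j"
    and "(\<Sum>i<N. \<Sum>j\<in>{..<N} - {i}. \<Sum>c\<in>UNIV. coord_gain l x c (t i j $ c))
         \<le> 2 * (\<Sum>c\<in>UNIV. coord_gain l x c (cc * d$c))"
proof -
  define \<alpha> where "\<alpha> i = (\<Sum>c\<in>{c. blk c = i}. a$c * d$c)" for i
  have "(\<Sum>i<N. \<alpha> i) = 0" using ad unfolding \<alpha>_def sum_blocks by (simp add: inner_vec_def)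
  then obtain \<theta> where \<theta>: "\<And>i j. i < N \<Longrightarrow> j < N \<Longrightarrow> 0 \<le> \<theta> i j \<and> \<theta> i j \<le> cc"
      "\<And>i j. \<theta> i j * \<alpha> i + \<theta> j i * \<alpha> j = 0" "\<And>i. i < N \<Longrightarrow> (\<Sum>j\<in>{..<N} - {i}. \<theta> i j) = cc"
    using pair_weights_exist[OF N2] cc by (metis less_imp_le)
  define t where "t i j = (\<chi> c. if blk c = i then \<theta> i j * d$c else if blk c = j then \<theta> j i * d$c else 0)"
    for i j
  show thesis
  proof (rule that[of t])
    fix i j assume ij: "i < N" "j < N" "i \<noteq> j"
    have "a \<bullet> t i j = (\<Sum>c\<in>UNIV. if blk c = i then \<theta> i j * (a$c * d$c)
        else if blk c = j then \<theta> j i * (a$c * d$c) else 0)"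
      unfolding inner_vec_def t_def by (intro sum.cong) auto
    also have "\<dots> = \<theta> i j * \<alpha> i + \<theta> j i * \<alpha> j"
      using ij by (simp add: sum_if_two_blocks \<alpha>_def sum_distrib_left)
    finally show "t i j \<in> pair_dirs i j"
      using \<theta>(2) by (simp add: pair_dirs_def supported_in_def t_def)
  next
    have split: "(\<Sum>c\<in>UNIV. coord_gain l x c (t i j $ c))
        = block_gain l x d i (\<theta> i j) + block_gain l x d j (\<theta> j i)" if "i \<noteq> j" for i j
    proof -
      have "(\<Sum>c\<in>UNIV. coord_gain l x c (t i j $ c)) = (\<Sum>c\<in>UNIV. if blk c = i then
          coord_gain l x c (\<theta> i j * d$c) else if blk c = j then coord_gain l x c (\<theta> j i * d$c) else 0)"
        unfolding t_def by (intro sum.cong) auto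
      then show ?thesis using that by (simp add: sum_if_two_blocks block_gain_def)
    qed
    have "(\<Sum>i<N. \<Sum>j\<in>{..<N} - {i}. \<Sum>c\<in>UNIV. coord_gain l x c (t i j $ c))
        = (\<Sum>i<N. \<Sum>j\<in>{..<N} - {i}. block_gain l x d i (\<theta> i j))
          + (\<Sum>i<N. \<Sum>j\<in>{..<N} - {i}. block_gain l x d j (\<theta> j i))"
      by (simp add: split sum.distrib)
    also have "(\<Sum>i<N. \<Sum>j\<in>{..<N} - {i}. block_gain l x d j (\<theta> j i))
        = (\<Sum>i<N. \<Sum>j\<in>{..<N} - {i}. block_gain l x d i (\<theta> i j))"
      by (rule sum_offdiag_swap[symmetric])
    also have "(\<Sum>i<N. \<Sum>j\<in>{..<N} - {i}. block_gain l x d i (\<theta> i j)) \<le> (\<Sum>i<N. block_gain l x d i cc)"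
      using \<theta>(1,3) by (intro sum_mono sum_block_gain_le[OF l cc(1)]) auto
    finally show "(\<Sum>i<N. \<Sum>j\<in>{..<N} - {i}. \<Sum>c\<in>UNIV. coord_gain l x c (t i j $ c))
        \<le> 2 * (\<Sum>c\<in>UNIV. coord_gain l x c (cc * d$c))" by (simp add: sum_block_gain)
  qed
qed

lemma descent_sum_ge:
  assumes lm: "\<forall>i<N. lm \<le> NGamma i" and Lmx: "\<forall>i<N. \<forall>j<N. L i j \<le> Lmx"
    and cc: "0 < cc" "cc \<le> 1" "Lmx * cc \<le> lm / 2"
  shows "cc * lm / 2 * (norm (dN x))^2 \<le> 2 * (\<Sum>p\<in>pairs. F x - F (step x p))"
proof -
  define d where "d = dN x"
  have "0 < L 0 0" "L 0 0 \<le> Lmx" using Lpos Lmx N2 by auto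
  then have Lmx0: "0 \<le> Lmx" by linarith
  obtain t where t_dir: "\<And>i j. i < N \<Longrightarrow> j < N \<Longrightarrow> i \<noteq> j \<Longrightarrow> t i j \<in> pair_dirs i j"
    and t_sum: "(\<Sum>i<N. \<Sum>j\<in>{..<N} - {i}. \<Sum>c\<in>UNIV. coord_gain Lmx x c (t i j $ c))
         \<le> 2 * (\<Sum>c\<in>UNIV. coord_gain Lmx x c (cc * d$c))"
    using pair_gain_decomposition[OF _ Lmx0 cc(1,2)] dN_optimal unfolding d_def by blast
  have "(\<Sum>i<N. \<Sum>j\<in>{..<N} - {i}. F (step x {i, j}) - F x)
      \<le> (\<Sum>i<N. \<Sum>j\<in>{..<N} - {i}. \<Sum>c\<in>UNIV. coord_gain Lmx x c (t i j $ c))"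
  proof (intro sum_mono)
    fix i j assume i: "i \<in> {..<N}" and j: "j \<in> {..<N} - {i}"
    have "F (step x {i, j}) \<le> pair_model i j x (t i j)"
      using step_le_pair_model(2) t_dir i j by auto
    also have "\<dots> \<le> F x + (\<Sum>c\<in>UNIV. coord_gain Lmx x c (t i j $ c))"
      unfolding pair_model_eq coord_gain_split[of "L i j"] coord_gain_split[of Lmx]
      using Lmx i j by (intro add_left_mono sum_mono mult_right_mono divide_right_mono) auto
    finally show "F (step x {i, j}) - F x \<le> (\<Sum>c\<in>UNIV. coord_gain Lmx x c (t i j $ c))" by simp
  qed
  also have "\<dots> \<le> 2 * (\<Sum>c\<in>UNIV. coord_gain Lmx x c (cc * d$c))" by (rule t_sum)
  also have "\<dots> \<le> 2 * (cc * (\<Sum>c\<in>UNIV. coord_gain 0 x c (d$c)) + Lmx / 2 * cc^2 * (norm d)^2)"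
    using sum_coord_gain_scaled_le[OF Lmx0, of cc x d] cc by simp
  also have "\<dots> \<le> - (cc * lm / 2 * (norm d)^2)"
  proof -
    have "cc * (\<Sum>c\<in>UNIV. coord_gain 0 x c (d$c)) \<le> cc * - (lm / 2 * (norm d)^2)"
      using sum_coord_gain_dN_le[OF lm, of x] cc by (intro mult_left_mono) (auto simp: d_def)
    moreover have "Lmx * cc * (cc * (norm d)^2) \<le> lm / 2 * (cc * (norm d)^2)"
      using cc by (intro mult_right_mono) auto
    ultimately show ?thesis by (simp add: power2_eq_square algebra_simps)
  qed
  finally have "(\<Sum>i<N. \<Sum>j\<in>{..<N} - {i}. F (step x {i, j}) - F x) \<le> - (cc * lm / 2 * (norm d)^2)" .
  moreover have "(\<Sum>i<N. \<Sum>j\<in>{..<N} - {i}. F (step x {i, j}) - F x)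
      = - (2 * (\<Sum>p\<in>pairs. F x - F (step x p)))"
    using sum_ordered_pairs_eq_twice_sum_pairs[of "\<lambda>p. F (step x p) - F x" N]
    by (simp add: pairs_def sum_negf[symmetric])
  ultimately show ?thesis by (simp add: d_def)
qed

lemma M2_nonneg: "0 \<le> M2 f g hc blk a N L x"
  unfolding M2_def wnorm_dual_def
  by (intro real_sqrt_ge_zero sum_nonneg divide_nonneg_pos) (auto simp: Gamma_pos[OF blk_less_N])

lemma M2_sq_eq: "(M2 f g hc blk a N L x)^2 = (\<Sum>c\<in>UNIV. Gamma N L (blk c) * (dN x $ c)^2)"
proof -
  have d: "d_Lam f g hc blk a (\<lambda>i. real N * Gamma N L i) x = dN x"
    by (simp add: dN_def NGamma_def[abs_def])
  have \<Gamma>: "0 < Gamma N L (blk c)" for c by (rule Gamma_pos[OF blk_less_N])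
  have "(M2 f g hc blk a N L x)^2 = (\<Sum>c\<in>UNIV. (Gamma N L (blk c) * dN x $ c)^2 / Gamma N L (blk c))"
    unfolding M2_def wnorm_dual_def Dmat_def d
    by (subst real_sqrt_pow2) (auto intro!: sum_nonneg simp: \<Gamma> less_imp_le)
  also have "\<dots> = (\<Sum>c\<in>UNIV. Gamma N L (blk c) * (dN x $ c)^2)"
    using \<Gamma> by (intro sum.cong refl) (simp add: power2_eq_square field_simps)
  finally show ?thesis .
qed

lemma M2_sq_le_descent: "\<exists>C\<ge>0. \<forall>x. (M2 f g hc blk a N L x)^2 \<le> C * (\<Sum>p\<in>pairs. F x - F (step x p))"
proof -
  define lm where "lm = Min (NGamma ` {..<N})"
  define Lmx where "Lmx = Max ((\<lambda>(i, j). L i j) ` ({..<N} \<times> {..<N}))"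
  define Gm where "Gm = Max (Gamma N L ` {..<N})"
  define cc where "cc = min 1 (lm / (2 * Lmx))"
  have lm: "\<forall>i<N. lm \<le> NGamma i" "0 < lm"
    unfolding lm_def using N2 NGamma_pos by (auto intro: Min_le) (subst Min_gr_iff, auto simp: lessThan_empty_iff)
  have Lmx: "\<forall>i<N. \<forall>j<N. L i j \<le> Lmx" unfolding Lmx_def by (auto intro!: Max_ge)
  have "0 < L 0 0" "L 0 0 \<le> Lmx" using Lpos Lmx N2 by auto
  then have Lmx0: "0 < Lmx" by linarith
  have Gm: "Gamma N L (blk c) \<le> Gm" for c unfolding Gm_def using blk_less_N by (auto intro!: Max_ge)
  then have Gm0: "0 < Gm" using Gamma_pos[OF blk_less_N] less_le_trans by blast
  have cc: "0 < cc" "cc \<le> 1" "Lmx * cc \<le> lm / 2"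
    using lm Lmx0 mult_left_mono[OF min.cobounded2[of 1 "lm / (2 * Lmx)"], of Lmx]
    by (auto simp: cc_def)
  have "(M2 f g hc blk a N L x)^2 \<le> Gm * 4 / (cc * lm) * (\<Sum>p\<in>pairs. F x - F (step x p))" for x
  proof -
    have "(M2 f g hc blk a N L x)^2 \<le> Gm * (norm (dN x))^2"
      unfolding M2_sq_eq norm_sq_vec sum_distrib_left by (intro sum_mono mult_right_mono Gm) auto
    also have "\<dots> \<le> Gm * (4 / (cc * lm) * (\<Sum>p\<in>pairs. F x - F (step x p)))"
      using descent_sum_ge[OF lm(1) Lmx cc, of x] cc lm Gm0
      by (intro mult_left_mono) (auto simp: field_simps)
    finally show ?thesis by simp
  qed
  moreover have "0 \<le> Gm * 4 / (cc * lm)"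
    using cc lm Gm0 by simp
  ultimately show ?thesis by blast
qed

lemma norm_dN_le_M2: "\<exists>K. \<forall>x. norm (dN x) \<le> K * M2 f g hc blk a N L x"
proof -
  define Gmin where "Gmin = Min (Gamma N L ` {..<N})"
  have Gmin: "0 < Gmin" "\<And>c. Gmin \<le> Gamma N L (blk c)"
    unfolding Gmin_def using N2 Gamma_pos blk_less_N by (subst Min_gr_iff, auto)
  have "norm (dN x) \<le> 1 / sqrt Gmin * M2 f g hc blk a N L x" for x
  proof -
    have "Gmin * (norm (dN x))^2 \<le> (M2 f g hc blk a N L x)^2"
      unfolding M2_sq_eq norm_sq_vec sum_distrib_left by (intro sum_mono mult_right_mono Gmin) auto
    then have "sqrt (Gmin * (norm (dN x))^2) \<le> sqrt ((M2 f g hc blk a N L x)^2)"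
      by (rule real_sqrt_le_mono)
    then have "sqrt Gmin * norm (dN x) \<le> M2 f g hc blk a N L x"
      using M2_nonneg by (simp add: real_sqrt_mult)
    then show ?thesis using Gmin by (simp add: field_simps)
  qed
  then show ?thesis by blast
qed

lemma continuous_on_g: "continuous_on UNIV g"
proof -
  define Lmx where "Lmx = Max ((\<lambda>(i, j). L i j) ` ({..<N} \<times> {..<N}))"
  have Lmx: "\<forall>i<N. \<forall>j<N. L i j \<le> Lmx" unfolding Lmx_def by (auto intro!: Max_ge)
  have "0 < L 0 0" "L 0 0 \<le> Lmx" using Lpos Lmx N2 by auto
  then have Lmx0: "0 \<le> Lmx" by linarith
  have bound: "\<bar>(g (x + s) - g x)$c\<bar> \<le> Lmx * norm s"
    if i: "i < N" and s: "supported_in blk {i} s" for i x s c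
  proof -
    have "supported_in blk {i, blk c} s" using s by (auto simp: supported_in_def)
    then have "blk_norm blk {i, blk c} (g (x + s) - g x) \<le> L i (blk c) * norm s"
      using Lip i blk_less_N by blast
    also have "\<dots> \<le> Lmx * norm s" using Lmx i blk_less_N by (intro mult_right_mono) auto
    finally show ?thesis
      using blk_norm_ge_component[of blk c "{i, blk c}" "g (x + s) - g x"] by simp
  qed
  have "(real CARD('n) * (real N * Lmx))-lipschitz_on UNIV g"
    using lipschitz_on_of_block_bounds[of blk N Lmx g, OF blk_less_N Lmx0 bound] .
  then show ?thesis by (rule lipschitz_on_continuous_on)
qed

lemma full_model_tendsto:
  assumes xk: "xk \<longlonglongrightarrow> xs" and sk: "sk \<longlonglongrightarrow> s"
  shows "(\<lambda>k. full_model (xk k) (sk k)) \<longlonglongrightarrow> full_model xs s"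
proof -
  have "isCont f xs" using grad has_derivative_continuous by blast
  moreover have "isCont g xs" using continuous_on_g by (simp add: continuous_on_eq_continuous_at)
  moreover have "isCont (sep_fun hc) (xs + s)"
    using continuous_on_sep_fun[OF hconv] by (simp add: continuous_on_eq_continuous_at)
  ultimately have "(\<lambda>k. f (xk k) + g (xk k) \<bullet> sk k + 1/2 * (\<Sum>c\<in>UNIV. NGamma (blk c) * (sk k $ c)^2)
      + sep_fun hc (xk k + sk k))
      \<longlonglongrightarrow> f xs + g xs \<bullet> s + 1/2 * (\<Sum>c\<in>UNIV. NGamma (blk c) * (s $ c)^2) + sep_fun hc (xs + s)"
    using xk sk by (intro tendsto_intros isCont_tendsto_compose[where g = f] isCont_tendsto_compose[where g = g]
        isCont_tendsto_compose[where g = "sep_fun hc"])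
  then show ?thesis by (simp add: full_model_def wnorm_NGamma_sq)
qed

lemma sep_fun_le_linearized_model:
  assumes opt: "\<And>t. a \<bullet> t = 0 \<Longrightarrow> full_model x 0 \<le> full_model x t" and t: "a \<bullet> t = 0"
  shows "sep_fun hc x \<le> g x \<bullet> t + sep_fun hc (x + t)"
proof -
  define W where "W = (wnorm blk NGamma t)^2"
  have W: "0 \<le> W" by (simp add: W_def)
  have approx: "sep_fun hc x \<le> g x \<bullet> t + sep_fun hc (x + t) + \<epsilon> * W" if \<epsilon>: "0 < \<epsilon>" "\<epsilon> \<le> 1" for \<epsilon>
  proof -
    have "full_model x 0 \<le> full_model x (\<epsilon> *\<^sub>R t)" using t by (intro opt) simp
    moreover have "(wnorm blk NGamma (\<epsilon> *\<^sub>R t))^2 = \<epsilon>^2 * W"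
      by (simp add: wnorm_NGamma_sq W_def sum_distrib_left power_mult_distrib algebra_simps)
    ultimately have "sep_fun hc x \<le> \<epsilon> * (g x \<bullet> t) + 1/2 * (\<epsilon>^2 * W) + sep_fun hc (x + \<epsilon> *\<^sub>R t)"
      by (simp add: full_model_def wnorm_NGamma_sq)
    moreover have "sep_fun hc (x + \<epsilon> *\<^sub>R t) \<le> (1 - \<epsilon>) * sep_fun hc x + \<epsilon> * sep_fun hc (x + t)"
      using convex_onD[OF convex_on_sep_fun[OF hconv], of \<epsilon> x "x + t"] \<epsilon> by (simp add: algebra_simps)
    ultimately have "\<epsilon> * sep_fun hc x \<le> \<epsilon> * (g x \<bullet> t + sep_fun hc (x + t) + \<epsilon> / 2 * W)"
      by (simp add: algebra_simps power2_eq_square)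
    then have "sep_fun hc x \<le> g x \<bullet> t + sep_fun hc (x + t) + \<epsilon> / 2 * W" using \<epsilon> by simp
    moreover have "\<epsilon> / 2 * W \<le> \<epsilon> * W" using \<epsilon> W by (intro mult_right_mono) auto
    ultimately show ?thesis by linarith
  qed
  show ?thesis
  proof (rule field_le_epsilon)
    fix e :: real assume e: "0 < e"
    define \<epsilon> where "\<epsilon> = min 1 (e / (W + 1))"
    have \<epsilon>: "0 < \<epsilon>" "\<epsilon> \<le> 1" using e W by (auto simp: \<epsilon>_def)
    have "\<epsilon> * W \<le> e / (W + 1) * (W + 1)" using \<epsilon> W by (intro mult_mono) (auto simp: \<epsilon>_def)
    then show "sep_fun hc x \<le> g x \<bullet> t + sep_fun hc (x + t) + e" using approx[OF \<epsilon>] W by simp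
  qed
qed

lemma stationary_of_limit:
  assumes a0: "a \<noteq> 0" and xk: "xk \<longlonglongrightarrow> xs" and feas: "\<forall>k. a \<bullet> xk k = b"
    and dk: "(\<lambda>k. dN (xk k)) \<longlonglongrightarrow> 0"
  shows "stationary g (sep_fun hc) a b xs"
proof -
  have "(\<lambda>k. a \<bullet> xk k) \<longlonglongrightarrow> a \<bullet> xs" by (intro tendsto_intros xk)
  then have axs: "a \<bullet> xs = b" using feas LIMSEQ_unique[OF tendsto_const] by auto
  have opt: "full_model xs 0 \<le> full_model xs t" if "a \<bullet> t = 0" for t
    by (rule LIMSEQ_le[OF full_model_tendsto[OF xk dk] full_model_tendsto[OF xk tendsto_const]])
      (use dN_optimal that in auto)
  define H where "H t = 0 + g xs \<bullet> t + sep_fun hc (xs + t)" for t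
  have "convex_on UNIV H" unfolding H_def by (rule convex_on_affine_plus_sep_fun[OF hconv])
  moreover have "H 0 \<le> H t" if "a \<bullet> t = 0" for t
    using sep_fun_le_linearized_model[OF opt that] by (simp add: H_def)
  ultimately obtain lam where lam: "\<forall>t. H 0 - lam * (a \<bullet> t) \<le> H t"
    using convex_min_on_hyperplane_multiplier[OF a0] by blast
  have "- g xs - lam *\<^sub>R a \<in> subdiff (sep_fun hc) xs"
    unfolding subdiff_def
  proof (intro CollectI allI)
    fix y
    show "sep_fun hc xs + (- g xs - lam *\<^sub>R a) \<bullet> (y - xs) \<le> sep_fun hc y"
      using lam[rule_format, of "y - xs"] by (simp add: H_def inner_diff_left algebra_simps)
  qed
  then show ?thesis unfolding stationary_def using axs by (intro conjI exI[of _ lam] bexI) auto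
qed

text \<open>Off the support of the pair distribution the step falls back to the pair {0, 1}. Hence
  every sample path is a feasible descent path, and the step takes finitely many values.\<close>
definition sampled_step :: "real^'n \<Rightarrow> nat set \<Rightarrow> real^'n" where
  "sampled_step x p = step x (if p \<in> pairs then p else {0, 1})"

lemma sampled_step_in_pairs: "\<exists>q\<in>pairs. sampled_step x p = step x q"
  using zero_one_in_pairs by (auto simp: sampled_step_def)

lemma finite_range_sampled_step: "finite (range (sampled_step x))"
  by (rule finite_subset[of _ "step x ` pairs"]) (use sampled_step_in_pairs pairs_finite in auto)

lemma inner_sampled_step: "a \<bullet> sampled_step x p = a \<bullet> x"
  using sampled_step_in_pairs inner_step by metis

lemma F_sampled_step_le: "F (sampled_step x p) \<le> F x"
  using sampled_step_in_pairs F_step_le by metis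

lemma inner_random_iter: "a \<bullet> random_iter sampled_step x \<omega> k = a \<bullet> x"
  by (induction k) (simp_all add: inner_sampled_step)

lemma rcd_iter_eq_random_iter:
  "\<forall>k. \<omega> !! k \<in> pairs \<Longrightarrow> rcd_iter f g hc L blk a x \<omega> k = random_iter sampled_step x \<omega> k"
  by (induction k) (simp_all add: sampled_step_def step_def Let_def)

lemma AE_rcd_iter_eq_random_iter:
  "AE \<omega> in stream_space (measure_pmf (pmf_of_set pairs)). rcd_iter f g hc L blk a x \<omega> = random_iter sampled_step x \<omega>"
proof -
  have "pairs \<noteq> {}" using zero_one_in_pairs by blast
  from AE_stream_in_pmf_of_set[OF pairs_finite this] show ?thesis
    by (rule eventually_mono) (simp add: fun_eq_iff rcd_iter_eq_random_iter)
qed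

lemma AE_M2_random_iter_tendsto_0:
  assumes low: "\<forall>y. a \<bullet> y = b \<longrightarrow> Fmin \<le> F y" and x: "a \<bullet> x = b"
  shows "AE \<omega> in stream_space (measure_pmf (pmf_of_set pairs)).
           (\<lambda>k. M2 f g hc blk a N L (random_iter sampled_step x \<omega> k)) \<longlonglongrightarrow> 0"
proof -
  obtain C where C: "0 \<le> C" "\<forall>x. (M2 f g hc blk a N L x)^2 \<le> C * (\<Sum>p\<in>pairs. F x - F (step x p))"
    using M2_sq_le_descent by blast
  have "(\<Sum>p\<in>pairs. F y - F (sampled_step y p)) = (\<Sum>p\<in>pairs. F y - F (step y p))" for y
    by (intro sum.cong) (auto simp: sampled_step_def)
  then have "AE \<omega> in stream_space (measure_pmf (pmf_of_set pairs)).
      summable (\<lambda>k. (M2 f g hc blk a N L (random_iter sampled_step x \<omega> k))^2)"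
    using pairs_finite zero_one_in_pairs finite_range_sampled_step low C x
    by (intro AE_summable_random_iter[where S = "{y. a \<bullet> y = b}" and V = F])
       (auto simp: inner_sampled_step)
  then show ?thesis
  proof eventually_elim
    case (elim \<omega>)
    then have "(\<lambda>k. sqrt ((M2 f g hc blk a N L (random_iter sampled_step x \<omega> k))^2)) \<longlonglongrightarrow> sqrt 0"
      by (intro tendsto_real_sqrt summable_LIMSEQ_zero)
    then show ?case using M2_nonneg by simp
  qed
qed

lemma convergent_F_random_iter:
  assumes low: "\<forall>y. a \<bullet> y = b \<longrightarrow> Fmin \<le> F y" and x: "a \<bullet> x = b"
  shows "convergent (\<lambda>k. F (random_iter sampled_step x \<omega> k))"
proof -
  have "decseq (\<lambda>k. F (random_iter sampled_step x \<omega> k))"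
    by (rule decseq_SucI) (simp add: F_sampled_step_le)
  moreover have "\<forall>k. Fmin \<le> F (random_iter sampled_step x \<omega> k)"
    using low x by (simp add: inner_random_iter)
  ultimately show ?thesis by (auto intro: decseq_convergent simp: convergent_def)
qed

lemma limit_points_stationary:
  assumes a0: "a \<noteq> 0" and x: "a \<bullet> x = b"
    and M2: "(\<lambda>k. M2 f g hc blk a N L (random_iter sampled_step x \<omega> k)) \<longlonglongrightarrow> 0"
    and r: "strict_mono r" and lim: "(random_iter sampled_step x \<omega> \<circ> r) \<longlonglongrightarrow> xs"
  shows "stationary g (sep_fun hc) a b xs"
proof -
  obtain K where K: "\<forall>y. norm (dN y) \<le> K * M2 f g hc blk a N L y" using norm_dN_le_M2 by blast
  have lim0: "(\<lambda>k. K * M2 f g hc blk a N L ((random_iter sampled_step x \<omega> \<circ> r) k)) \<longlonglongrightarrow> 0"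
    using tendsto_mult_right_zero[OF LIMSEQ_subseq_LIMSEQ[OF M2 r]] by (simp add: comp_def)
  have bound: "\<forall>k. norm (dN ((random_iter sampled_step x \<omega> \<circ> r) k))
      \<le> K * M2 f g hc blk a N L ((random_iter sampled_step x \<omega> \<circ> r) k)"
    using K by blast
  have "(\<lambda>k. dN ((random_iter sampled_step x \<omega> \<circ> r) k)) \<longlonglongrightarrow> 0"
    by (rule Lim_null_comparison[OF always_eventually[OF bound] lim0])
  then show ?thesis using stationary_of_limit[OF a0 lim] inner_random_iter x by simp
qed

end

theorem theorem3:
  fixes f :: "real^'n \<Rightarrow> real" and g :: "real^'n \<Rightarrow> real^'n"
    and hc :: "'n \<Rightarrow> real \<Rightarrow> real" and blk :: "'n \<Rightarrow> nat" and N :: nat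
    and L :: "nat \<Rightarrow> nat \<Rightarrow> real" and a x0 :: "real^'n" and b :: real
  assumes N2: "N \<ge> 2" and blocks: "blk ` UNIV = {..<N}"
    and grad: "\<forall>x. (f has_derivative (\<lambda>v. g x \<bullet> v)) (at x)"
    and Lpos: "\<forall>i<N. \<forall>j<N. L i j = L j i \<and> L i j > 0"
    and Lip: "\<forall>i<N. \<forall>j<N. \<forall>x s. supported_in blk {i, j} s \<longrightarrow>
               blk_norm blk {i, j} (g (x + s) - g x) \<le> L i j * norm s"
    and hconv: "\<forall>c. convex_on UNIV (hc c)"
    and a0: "a \<noteq> 0" and feas: "a \<bullet> x0 = b"
    and Fbdd: "bdd_below ((\<lambda>x. f x + sep_fun hc x) ` {x. a \<bullet> x = b})"
  defines "M \<equiv> stream_space (measure_pmf (pmf_of_set {{i, j} | i j. i < N \<and> j < N \<and> i \<noteq> j}))"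
    and "X \<equiv> rcd_iter f g hc L blk a x0"
  shows "(AE \<omega> in M. (\<lambda>k. M2 f g hc blk a N L (X \<omega> k)) \<longlonglongrightarrow> 0)
       \<and> (\<exists>Fbar. Fbar \<in> borel_measurable M \<and>
            (AE \<omega> in M. (\<lambda>k. f (X \<omega> k) + sep_fun hc (X \<omega> k)) \<longlonglongrightarrow> Fbar \<omega>))
       \<and> (AE \<omega> in M. \<forall>xs. (\<exists>r. strict_mono r \<and> (X \<omega> \<circ> r) \<longlonglongrightarrow> xs) \<longrightarrow>
            stationary g (sep_fun hc) a b xs)"
proof -
  interpret rcd_problem f g hc blk N L a
    using N2 blocks grad Lpos Lip hconv by unfold_locales auto
  obtain Fmin where low: "\<forall>y. a \<bullet> y = b \<longrightarrow> Fmin \<le> F y"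
    using Fbdd unfolding bdd_below_def F_def by auto
  define Z where "Z = random_iter sampled_step x0"
  have M: "M = stream_space (measure_pmf (pmf_of_set pairs))" by (simp add: M_def pairs_def)
  define Fbar where "Fbar \<omega> = lim (\<lambda>k. F (Z \<omega> k))" for \<omega>
  have "Fbar \<in> borel_measurable M"
    unfolding Fbar_def M Z_def
    by (intro borel_measurable_lim_metric measurable_random_iter finite_range_sampled_step)
  moreover have "AE \<omega> in M. (\<lambda>k. M2 f g hc blk a N L (X \<omega> k)) \<longlonglongrightarrow> 0
      \<and> (\<lambda>k. f (X \<omega> k) + sep_fun hc (X \<omega> k)) \<longlonglongrightarrow> Fbar \<omega>
      \<and> (\<forall>xs. (\<exists>r. strict_mono r \<and> (X \<omega> \<circ> r) \<longlonglongrightarrow> xs) \<longrightarrow> stationary g (sep_fun hc) a b xs)"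
    using AE_rcd_iter_eq_random_iter[of x0] AE_M2_random_iter_tendsto_0[OF low feas] unfolding M[symmetric]
  proof eventually_elim
    case (elim \<omega>)
    moreover have "(\<lambda>k. F (Z \<omega> k)) \<longlonglongrightarrow> Fbar \<omega>"
      using convergent_F_random_iter[OF low feas] by (simp add: Fbar_def Z_def convergent_LIMSEQ_iff)
    ultimately show ?case
      using limit_points_stationary[OF a0 feas] by (auto simp: X_def Z_def F_def)
  qed
  ultimately show ?thesis unfolding AE_conj_iff by blast
qed

end
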